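(* Let $c\in\mathbb{R}$ and let $Z=(U,V,W)\in H^1(\mathbb{R})^3$ (a function of $x$ only) satisfy, for all $\phi\in\mathcal{C}_0^\infty(\mathbb{R}^+\times\mathbb{R})$, $$\langle -cU,(1-\partial_x^2)\phi_x\rangle+\langle U_x(V+W),\phi_{xx}\rangle-\tfrac12\langle U^2,\phi_{xxx}\rangle+\langle \tfrac32U^2+\tfrac12U_x^2+U(V+W)+U_x(V+W)_x+\tfrac12(V^2+W^2-V_x^2-W_x^2),\phi_x\rangle=0,$$ $$\langle -cV,(1-\partial_x^2)\phi_x\rangle+\langle V_x(U+W),\phi_{xx}\rangle-\tfrac12\langle V^2,\phi_{xxx}\rangle+\langle \tfrac32V^2+\tfrac12V_x^2+V(U+W)+V_x(U+W)_x+\tfrac12(U^2+W^2-U_x^2-W_x^2),\phi_x\rangle=0,$$ $$\langle -cW,(1-\partial_x^2)\phi_x\rangle+\langle W_x(U+V),\phi_{xx}\rangle-\tfrac12\langle W^2,\phi_{xxx}\rangle+\langle \tfrac32W^2+\tfrac12W_x^2+W(U+V)+W_x(U+V)_x+\tfrac12(U^2+V^2-U_x^2-V_x^2),\phi_x\rangle=0.$$ Then for any fixed $t_0\in\mathbb{R}^+$, the function $z(t,x)=Z(x-c(t-t_0))$ is a weak solution of the three-component Camassa--Holm system.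
   Context: $\langle F,\phi\rangle=\int_{\mathbb{R}^+}\int_{\mathbb{R}}F(t,x)\phi(t,x)\,dx\,dt$ denotes the distributional pairing in $(t,x)$. Let $\mathcal{N}=\mathcal{C}(\mathbb{R}^+;H^1(\mathbb{R})^3)$. A function $z=(u,v,w)\in\mathcal{N}$ is a weak solution of the three-component Camassa--Holm system if for all $\phi\in\mathcal{C}_0^\infty(\mathbb{R}^+\times\mathbb{R})$: $\langle u,(1-\partial_x^2)\phi_t\rangle+\langle u_x(v+w),\phi_{xx}\rangle-\frac12\langle u^2,\phi_{xxx}\rangle+\langle\frac32u^2+\frac12u_x^2+u(v+w)+u_x(v+w)_x+\frac12(v^2+w^2-v_x^2-w_x^2),\phi_x\rangle=0$, $\langle v,(1-\partial_x^2)\phi_t\rangle+\langle v_x(u+w),\phi_{xx}\rangle-\frac12\langle v^2,\phi_{xxx}\rangle+\langle\frac32v^2+\frac12v_x^2+v(u+w)+v_x(u+w)_x+\frac12(u^2+w^2-u_x^2-w_x^2),\phi_x\rangle=0$, $\langle w,(1-\partial_x^2)\phi_t\rangle+\langle w_x(u+v),\phi_{xx}\rangle-\frac12\langle w^2,\phi_{xxx}\rangle+\langle\frac32w^2+\frac12w_x^2+w(u+v)+w_x(u+v)_x+\frac12(u^2+v^2-u_x^2-v_x^2),\phi_x\rangle=0$. (This is the weak form of $m_t-m_xu+2mu_x+(mv+mw)_x+nv_x+lw_x=0$ and its two cyclic analogues, with $m=u-u_{xx}$, $n=v-v_{xx}$, $l=w-w_{xx}$.) *)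

theory Defs
  imports "HOL-Analysis.Analysis"
begin

definition pdt :: "(real \<times> real \<Rightarrow> real) \<Rightarrow> real \<times> real \<Rightarrow> real" where
  "pdt f = (\<lambda>p. deriv (\<lambda>s. f (s, snd p)) (fst p))"

definition pdx :: "(real \<times> real \<Rightarrow> real) \<Rightarrow> real \<times> real \<Rightarrow> real" where
  "pdx f = (\<lambda>p. deriv (\<lambda>y. f (fst p, y)) (snd p))"

fun iter_pd :: "bool list \<Rightarrow> (real \<times> real \<Rightarrow> real) \<Rightarrow> real \<times> real \<Rightarrow> real" where
  "iter_pd [] f = f"
| "iter_pd (b # bs) f = (if b then pdt else pdx) (iter_pd bs f)"

definition smooth2 :: "(real \<times> real \<Rightarrow> real) \<Rightarrow> bool" where
  "smooth2 f \<longleftrightarrow> (\<forall>ds. continuous_on UNIV (iter_pd ds f) \<and>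
      (\<forall>t x. (\<lambda>s. iter_pd ds f (s, x)) differentiable (at t) \<and>
             (\<lambda>y. iter_pd ds f (t, y)) differentiable (at x)))"

definition test_fun :: "(real \<times> real \<Rightarrow> real) \<Rightarrow> bool" where
  "test_fun \<phi> \<longleftrightarrow> smooth2 \<phi> \<and> compact (closure {p. \<phi> p \<noteq> 0}) \<and>
      closure {p. \<phi> p \<noteq> 0} \<subseteq> {0<..} \<times> UNIV"

definition test_fun1 :: "(real \<Rightarrow> real) \<Rightarrow> bool" where
  "test_fun1 \<psi> \<longleftrightarrow> (\<forall>n x. ((deriv ^^ n) \<psi>) differentiable (at x)) \<and>
      compact (closure {x. \<psi> x \<noteq> 0})"

definition L2 :: "(real \<Rightarrow> real) \<Rightarrow> bool" where
  "L2 f \<longleftrightarrow> f \<in> borel_measurable lborel \<and> integrable lborel (\<lambda>x. (f x)\<^sup>2)"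

definition H1_deriv :: "(real \<Rightarrow> real) \<Rightarrow> (real \<Rightarrow> real) \<Rightarrow> bool" where
  "H1_deriv f g \<longleftrightarrow> L2 f \<and> L2 g \<and>
     (\<forall>\<psi>. test_fun1 \<psi> \<longrightarrow>
        (LINT x|lborel. f x * deriv \<psi> x) = - (LINT x|lborel. g x * \<psi> x))"

definition H1_dist :: "(real \<Rightarrow> real) \<Rightarrow> (real \<Rightarrow> real) \<Rightarrow> (real \<Rightarrow> real) \<Rightarrow> (real \<Rightarrow> real) \<Rightarrow> real" where
  "H1_dist f fx g gx = sqrt ((LINT x|lborel. (f x - g x)\<^sup>2) + (LINT x|lborel. (fx x - gx x)\<^sup>2))"

definition pair :: "(real \<Rightarrow> real \<Rightarrow> real) \<Rightarrow> (real \<times> real \<Rightarrow> real) \<Rightarrow> real" where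
  "pair F \<phi> = (LINT t:{0<..}|lborel. (LINT x|lborel. F t x * \<phi> (t, x)))"

definition Lop :: "(real \<times> real \<Rightarrow> real) \<Rightarrow> real \<times> real \<Rightarrow> real" where
  "Lop f = (\<lambda>p. f p - pdx (pdx f) p)"

definition CH_rest :: "(real \<Rightarrow> real \<Rightarrow> real) \<Rightarrow> (real \<Rightarrow> real \<Rightarrow> real) \<Rightarrow>
    (real \<Rightarrow> real \<Rightarrow> real) \<Rightarrow> (real \<Rightarrow> real \<Rightarrow> real) \<Rightarrow>
    (real \<Rightarrow> real \<Rightarrow> real) \<Rightarrow> (real \<Rightarrow> real \<Rightarrow> real) \<Rightarrow> (real \<times> real \<Rightarrow> real) \<Rightarrow> real" where
  "CH_rest u ux v vx w wx \<phi> =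
     pair (\<lambda>t x. ux t x * (v t x + w t x)) (pdx (pdx \<phi>))
     - 1/2 * pair (\<lambda>t x. (u t x)\<^sup>2) (pdx (pdx (pdx \<phi>)))
     + pair (\<lambda>t x. 3/2 * (u t x)\<^sup>2 + 1/2 * (ux t x)\<^sup>2 + u t x * (v t x + w t x)
                 + ux t x * (vx t x + wx t x)
                 + 1/2 * ((v t x)\<^sup>2 + (w t x)\<^sup>2 - (vx t x)\<^sup>2 - (wx t x)\<^sup>2)) (pdx \<phi>)"

text \<open>Weak solution z = (u,v,w) \<in> C(R^+; H^1(R)^3) of the three-component CH system.
  ux, vx, wx are the (a.e. unique) weak x-derivatives.\<close>
definition CH3_weak_solution :: "(real \<Rightarrow> real \<Rightarrow> real) \<Rightarrow> (real \<Rightarrow> real \<Rightarrow> real) \<Rightarrow>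
    (real \<Rightarrow> real \<Rightarrow> real) \<Rightarrow> bool" where
  "CH3_weak_solution u v w \<longleftrightarrow> (\<exists>ux vx wx.
     (\<forall>t>0. H1_deriv (u t) (ux t) \<and> H1_deriv (v t) (vx t) \<and> H1_deriv (w t) (wx t)) \<and>
     (\<forall>t0>0. \<forall>\<epsilon>>0. \<exists>\<delta>>0. \<forall>t>0. \<bar>t - t0\<bar> < \<delta> \<longrightarrow>
        H1_dist (u t) (ux t) (u t0) (ux t0) < \<epsilon> \<and>
        H1_dist (v t) (vx t) (v t0) (vx t0) < \<epsilon> \<and>
        H1_dist (w t) (wx t) (w t0) (wx t0) < \<epsilon>) \<and>
     (\<forall>\<phi>. test_fun \<phi> \<longrightarrow>
        pair u (Lop (pdt \<phi>)) + CH_rest u ux v vx w wx \<phi> = 0 \<and>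
        pair v (Lop (pdt \<phi>)) + CH_rest v vx u ux w wx \<phi> = 0 \<and>
        pair w (Lop (pdt \<phi>)) + CH_rest w wx u ux v vx \<phi> = 0))"

end

theory Submission
  imports Defs
begin

text \<open>Substituting \<open>x \<mapsto> x + c (t - t\<^sub>0)\<close> in the space-time pairings turns a test function
  \<open>\<phi>\<close> into the sheared test function \<open>\<psi> = \<phi> \<circ> shear\<close> and \<open>\<phi>\<^sub>t\<close> into
  \<open>\<psi>\<^sub>t - c \<psi>\<^sub>x\<close>. Because the profile does not depend on \<open>t\<close>, its pairing with
  \<open>(1 - \<partial>\<^sub>x\<^sup>2) \<psi>\<^sub>t = \<partial>\<^sub>t (1 - \<partial>\<^sub>x\<^sup>2) \<psi>\<close> vanishes by the fundamental theorem
  of calculus in \<open>t\<close>, and what is left is exactly the travelling-wave identity assumed for the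
  profile. Continuity in time with values in \<open>H\<^sup>1\<close> is continuity of translations in \<open>L\<^sup>2\<close>,
  obtained by truncation from the \<open>L\<^sup>1\<close> case, which in turn reduces to indicators of sets
  of finite measure.\<close>

lemma iter_pd_append: "iter_pd (ds @ es) f = iter_pd ds (iter_pd es f)"
  by (induction ds) auto

lemma smooth2_iter_pd: "smooth2 f \<Longrightarrow> smooth2 (iter_pd ds f)"
  unfolding smooth2_def iter_pd_append[symmetric] by blast

lemma smooth2_pdx: "smooth2 f \<Longrightarrow> smooth2 (pdx f)"
  using smooth2_iter_pd[of f "[False]"] by simp

lemma smooth2_pdt: "smooth2 f \<Longrightarrow> smooth2 (pdt f)"
  using smooth2_iter_pd[of f "[True]"] by simp

lemma smooth2_continuous_on: "smooth2 f \<Longrightarrow> continuous_on UNIV f"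
  unfolding smooth2_def by (metis iter_pd.simps(1))

lemma smooth2_has_derivative_t:
  "smooth2 f \<Longrightarrow> ((\<lambda>s. f (s, x)) has_real_derivative pdt f (t, x)) (at t)"
  unfolding smooth2_def pdt_def
  by (metis DERIV_deriv_iff_real_differentiable fst_conv iter_pd.simps(1) snd_conv)

lemma smooth2_has_derivative_x:
  "smooth2 f \<Longrightarrow> ((\<lambda>y. f (t, y)) has_real_derivative pdx f (t, x)) (at x)"
  unfolding smooth2_def pdx_def
  by (metis DERIV_deriv_iff_real_differentiable fst_conv iter_pd.simps(1) snd_conv)

lemma pdt_add_scaled:
  assumes "smooth2 f" "smooth2 g"
  shows "pdt (\<lambda>p. f p + a * g p) = (\<lambda>p. pdt f p + a * pdt g p)"
proof
  fix p :: "real \<times> real"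
  have "((\<lambda>s. f (s, snd p) + a * g (s, snd p)) has_real_derivative
      pdt f (fst p, snd p) + a * pdt g (fst p, snd p)) (at (fst p))"
    by (intro DERIV_add DERIV_cmult smooth2_has_derivative_t assms)
  then show "pdt (\<lambda>p. f p + a * g p) p = pdt f p + a * pdt g p"
    unfolding pdt_def[of "\<lambda>p. f p + a * g p"] by (simp add: DERIV_imp_deriv)
qed

lemma pdx_add_scaled:
  assumes "smooth2 f" "smooth2 g"
  shows "pdx (\<lambda>p. f p + a * g p) = (\<lambda>p. pdx f p + a * pdx g p)"
proof
  fix p :: "real \<times> real"
  have "((\<lambda>y. f (fst p, y) + a * g (fst p, y)) has_real_derivative
      pdx f (fst p, snd p) + a * pdx g (fst p, snd p)) (at (snd p))"
    by (intro DERIV_add DERIV_cmult smooth2_has_derivative_x assms)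
  then show "pdx (\<lambda>p. f p + a * g p) p = pdx f p + a * pdx g p"
    unfolding pdx_def[of "\<lambda>p. f p + a * g p"] by (simp add: DERIV_imp_deriv)
qed

lemma iter_pd_add_scaled:
  assumes "smooth2 f" "smooth2 g"
  shows "iter_pd ds (\<lambda>p. f p + a * g p) = (\<lambda>p. iter_pd ds f p + a * iter_pd ds g p)"
proof (induction ds)
  case (Cons b ds)
  have "smooth2 (iter_pd ds f)" "smooth2 (iter_pd ds g)"
    using assms by (simp_all add: smooth2_iter_pd)
  then show ?case
    using Cons by (simp add: pdt_add_scaled pdx_add_scaled)
qed simp

lemma smooth2_add_scaled:
  assumes f: "smooth2 f" and g: "smooth2 g"
  shows "smooth2 (\<lambda>p. f p + a * g p)"
  unfolding smooth2_def iter_pd_add_scaled[OF assms]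
proof (intro allI conjI)
  fix ds t x
  have sf: "smooth2 (iter_pd ds f)" and sg: "smooth2 (iter_pd ds g)"
    using f g by (simp_all add: smooth2_iter_pd)
  show "continuous_on UNIV (\<lambda>p. iter_pd ds f p + a * iter_pd ds g p)"
    using smooth2_continuous_on[OF sf] smooth2_continuous_on[OF sg] by (intro continuous_intros)
  have "((\<lambda>s. iter_pd ds f (s, x) + a * iter_pd ds g (s, x)) has_real_derivative
      pdt (iter_pd ds f) (t, x) + a * pdt (iter_pd ds g) (t, x)) (at t)"
    by (intro DERIV_add DERIV_cmult smooth2_has_derivative_t sf sg)
  then show "(\<lambda>s. iter_pd ds f (s, x) + a * iter_pd ds g (s, x)) differentiable at t"
    using real_differentiable_def by blast
  have "((\<lambda>y. iter_pd ds f (t, y) + a * iter_pd ds g (t, y)) has_real_derivative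
      pdx (iter_pd ds f) (t, x) + a * pdx (iter_pd ds g) (t, x)) (at x)"
    by (intro DERIV_add DERIV_cmult smooth2_has_derivative_x sf sg)
  then show "(\<lambda>y. iter_pd ds f (t, y) + a * iter_pd ds g (t, y)) differentiable at x"
    using real_differentiable_def by blast
qed

lemma smooth2_has_derivative:
  assumes f: "smooth2 f"
  shows "(f has_derivative (\<lambda>(h, k). pdt f p * h + pdx f p * k)) (at p)"
proof -
  obtain x y where p: "p = (x, y)" by (cases p)
  have "continuous (at (x, y)) (pdx f)"
    using smooth2_continuous_on[OF smooth2_pdx[OF f]] by (simp add: continuous_on_eq_continuous_at)
  then have cont: "continuous (at (x, y)) (\<lambda>p. blinfun_mult_right (pdx f p))"
    by (rule bounded_linear.continuous[OF bounded_linear_blinfun_mult_right])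
  have "((\<lambda>(x, y). f (x, y)) has_derivative
      (\<lambda>(h, k). pdt f (x, y) * h + blinfun_apply (blinfun_mult_right (pdx f (x, y))) k))
      (at (x, y) within UNIV \<times> UNIV)"
  proof (rule has_derivative_partialsI)
    show "((\<lambda>x. f (x, y)) has_derivative (*) (pdt f (x, y))) (at x within UNIV)"
      using smooth2_has_derivative_t[OF f, of y x] by (simp add: has_field_derivative_def)
    show "((\<lambda>y. f (x, y)) has_derivative blinfun_apply (blinfun_mult_right (pdx f (x, y))))
        (at y within UNIV)" for x y
      using smooth2_has_derivative_x[OF f, of x y] by (simp add: has_field_derivative_def)
    show "continuous (at (x, y) within UNIV \<times> UNIV) (\<lambda>(x, y). blinfun_mult_right (pdx f (x, y)))"
      using cont by (simp add: case_prod_beta')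
  qed auto
  then show ?thesis using p by (simp add: case_prod_beta')
qed


lemma dist_Pair_le_abs: "dist (a, b) (c, d) \<le> \<bar>a - c\<bar> + \<bar>b - (d::real)\<bar>" for a c :: real
proof -
  have "dist (a, b) (c, d) = norm (a - c, b - d)" by (simp add: dist_norm)
  also have "\<dots> \<le> norm (a - c) + norm (b - d)" by (rule norm_Pair_le)
  finally show ?thesis by simp
qed

lemma tendsto_at_right_0_mean_value_box:
  fixes g :: "real \<times> real \<Rightarrow> real"
  assumes g: "isCont g (t, y)"
    and mv: "\<And>h. 0 < h \<Longrightarrow> \<exists>\<xi> \<eta>. \<bar>\<xi> - t\<bar> \<le> h \<and> \<bar>\<eta> - y\<bar> \<le> h \<and> D h = g (\<xi>, \<eta>)"
  shows "(D \<longlongrightarrow> g (t, y)) (at_right 0)"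
proof (rule tendstoI)
  fix e :: real assume "e > 0"
  then obtain d where d: "d > 0" "\<And>q. dist q (t, y) < d \<Longrightarrow> dist (g q) (g (t, y)) < e"
    using g unfolding continuous_at_eps_delta by blast
  show "\<forall>\<^sub>F h in at_right 0. dist (D h) (g (t, y)) < e"
    unfolding eventually_at_right_field
  proof (intro exI[of _ "d / 2"] conjI allI impI)
    fix h :: real assume h: "0 < h" "h < d / 2"
    obtain \<xi> \<eta> where "\<bar>\<xi> - t\<bar> \<le> h" "\<bar>\<eta> - y\<bar> \<le> h" "D h = g (\<xi>, \<eta>)"
      using mv[OF h(1)] by blast
    moreover have "dist (\<xi>, \<eta>) (t, y) < d"
      using dist_Pair_le_abs[of \<xi> \<eta> t y] calculation h by linarith
    ultimately show "dist (D h) (g (t, y)) < e" using d(2) by simp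
  qed (use d in simp)
qed

lemma second_difference_pdx_pdt:
  assumes f: "smooth2 f" and h: "0 < h"
  obtains \<xi> \<eta> where "t < \<xi>" "\<xi> < t + h" "y < \<eta>" "\<eta> < y + h"
    "f (t + h, y + h) - f (t + h, y) - f (t, y + h) + f (t, y) = h * (h * pdx (pdt f) (\<xi>, \<eta>))"
proof -
  have "\<And>s. ((\<lambda>s. f (s, y + h) - f (s, y)) has_real_derivative pdt f (s, y + h) - pdt f (s, y)) (at s)"
    by (intro DERIV_diff smooth2_has_derivative_t f)
  from MVT2[where a = t and b = "t + h", OF _ this] h
  obtain \<xi> where \<xi>: "t < \<xi>" "\<xi> < t + h"
    and e1: "(f (t + h, y + h) - f (t + h, y)) - (f (t, y + h) - f (t, y))
      = h * (pdt f (\<xi>, y + h) - pdt f (\<xi>, y))"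
    by auto
  have "\<And>z. ((\<lambda>z. pdt f (\<xi>, z)) has_real_derivative pdx (pdt f) (\<xi>, z)) (at z)"
    by (intro smooth2_has_derivative_x smooth2_pdt f)
  from MVT2[where a = y and b = "y + h", OF _ this] h
  obtain \<eta> where \<eta>: "y < \<eta>" "\<eta> < y + h"
    and e2: "pdt f (\<xi>, y + h) - pdt f (\<xi>, y) = h * pdx (pdt f) (\<xi>, \<eta>)"
    by auto
  show ?thesis using that[OF \<xi> \<eta>] e1 e2 by (simp add: algebra_simps)
qed

lemma second_difference_pdt_pdx:
  assumes f: "smooth2 f" and h: "0 < h"
  obtains \<xi> \<eta> where "t < \<xi>" "\<xi> < t + h" "y < \<eta>" "\<eta> < y + h"
    "f (t + h, y + h) - f (t + h, y) - f (t, y + h) + f (t, y) = h * (h * pdt (pdx f) (\<xi>, \<eta>))"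
proof -
  have "\<And>z. ((\<lambda>z. f (t + h, z) - f (t, z)) has_real_derivative pdx f (t + h, z) - pdx f (t, z)) (at z)"
    by (intro DERIV_diff smooth2_has_derivative_x f)
  from MVT2[where a = y and b = "y + h", OF _ this] h
  obtain \<eta> where \<eta>: "y < \<eta>" "\<eta> < y + h"
    and e1: "(f (t + h, y + h) - f (t, y + h)) - (f (t + h, y) - f (t, y))
      = h * (pdx f (t + h, \<eta>) - pdx f (t, \<eta>))"
    by auto
  have "\<And>s. ((\<lambda>s. pdx f (s, \<eta>)) has_real_derivative pdt (pdx f) (s, \<eta>)) (at s)"
    by (intro smooth2_has_derivative_t smooth2_pdx f)
  from MVT2[where a = t and b = "t + h", OF _ this] h
  obtain \<xi> where \<xi>: "t < \<xi>" "\<xi> < t + h"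
    and e2: "pdx f (t + h, \<eta>) - pdx f (t, \<eta>) = h * pdt (pdx f) (\<xi>, \<eta>)"
    by auto
  show ?thesis using that[OF \<xi> \<eta>] e1 e2 by (simp add: algebra_simps)
qed

text \<open>Schwarz's theorem: both mixed derivatives are the limit of the normalised second difference.\<close>
lemma pdx_pdt_commute:
  assumes f: "smooth2 f"
  shows "pdx (pdt f) = pdt (pdx f)"
proof (rule ext, clarify)
  fix t y :: real
  define D where "D h = (f (t + h, y + h) - f (t + h, y) - f (t, y + h) + f (t, y)) / (h * h)" for h
  have "(D \<longlongrightarrow> pdx (pdt f) (t, y)) (at_right 0)"
  proof (rule tendsto_at_right_0_mean_value_box)
    show "isCont (pdx (pdt f)) (t, y)"
      using smooth2_continuous_on[OF smooth2_pdx[OF smooth2_pdt[OF f]]]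
      by (simp add: continuous_on_eq_continuous_at)
    fix h :: real assume h: "0 < h"
    obtain \<xi> \<eta> where "t < \<xi>" "\<xi> < t + h" "y < \<eta>" "\<eta> < y + h"
      "f (t + h, y + h) - f (t + h, y) - f (t, y + h) + f (t, y) = h * (h * pdx (pdt f) (\<xi>, \<eta>))"
      using second_difference_pdx_pdt[OF f h] .
    then show "\<exists>\<xi> \<eta>. \<bar>\<xi> - t\<bar> \<le> h \<and> \<bar>\<eta> - y\<bar> \<le> h \<and> D h = pdx (pdt f) (\<xi>, \<eta>)"
      using h by (intro exI[of _ \<xi>] exI[of _ \<eta>]) (simp add: D_def)
  qed
  moreover have "(D \<longlongrightarrow> pdt (pdx f) (t, y)) (at_right 0)"
  proof (rule tendsto_at_right_0_mean_value_box)
    show "isCont (pdt (pdx f)) (t, y)"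
      using smooth2_continuous_on[OF smooth2_pdt[OF smooth2_pdx[OF f]]]
      by (simp add: continuous_on_eq_continuous_at)
    fix h :: real assume h: "0 < h"
    obtain \<xi> \<eta> where "t < \<xi>" "\<xi> < t + h" "y < \<eta>" "\<eta> < y + h"
      "f (t + h, y + h) - f (t + h, y) - f (t, y + h) + f (t, y) = h * (h * pdt (pdx f) (\<xi>, \<eta>))"
      using second_difference_pdt_pdx[OF f h] .
    then show "\<exists>\<xi> \<eta>. \<bar>\<xi> - t\<bar> \<le> h \<and> \<bar>\<eta> - y\<bar> \<le> h \<and> D h = pdt (pdx f) (\<xi>, \<eta>)"
      using h by (intro exI[of _ \<xi>] exI[of _ \<eta>]) (simp add: D_def)
  qed
  ultimately show "pdx (pdt f) (t, y) = pdt (pdx f) (t, y)"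
    by (rule tendsto_unique[rotated]) simp
qed

section \<open>The shear \<open>(t, x) \<mapsto> (t, x + c (t - t\<^sub>0))\<close>\<close>

definition shear :: "real \<Rightarrow> real \<Rightarrow> real \<times> real \<Rightarrow> real \<times> real" where
  "shear c t0 p = (fst p, snd p + c * (fst p - t0))"

lemma shear_inverse: "shear c t0 (shear (- c) t0 p) = p" "shear (- c) t0 (shear c t0 p) = p"
  unfolding shear_def by (auto simp: algebra_simps)

lemma continuous_on_shear: "continuous_on UNIV (shear c t0)"
  unfolding shear_def by (intro continuous_intros)

lemma has_derivative_t_shear:
  assumes f: "smooth2 f"
  shows "((\<lambda>s. f (shear c t0 (s, y))) has_real_derivative
    pdt f (shear c t0 (s, y)) + c * pdx f (shear c t0 (s, y))) (at s)"
proof -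
  define q where "q = shear c t0 (s, y)"
  have "((\<lambda>s. (s, y + c * (s - t0))) has_derivative (\<lambda>h. (h, c * h))) (at s)"
    by (auto intro!: derivative_eq_intros)
  from diff_chain_at[OF this smooth2_has_derivative[OF f, of "(s, y + c * (s - t0))"]]
  have "((\<lambda>s. f (shear c t0 (s, y))) has_derivative
      (\<lambda>(h, k). pdt f q * h + pdx f q * k) \<circ> (\<lambda>h. (h, c * h))) (at s)"
    by (simp add: o_def shear_def q_def)
  moreover have "(\<lambda>(h, k). pdt f q * h + pdx f q * k) \<circ> (\<lambda>h. (h, c * h)) = (*) (pdt f q + c * pdx f q)"
    by (simp add: fun_eq_iff algebra_simps)
  ultimately show ?thesis by (simp add: has_field_derivative_def q_def)
qed

lemma has_derivative_x_shear:
  assumes f: "smooth2 f"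
  shows "((\<lambda>y. f (shear c t0 (s, y))) has_real_derivative pdx f (shear c t0 (s, y))) (at y)"
proof -
  have "((\<lambda>y. y + c * (s - t0)) has_real_derivative 1) (at y)"
    by (auto intro!: derivative_eq_intros)
  from DERIV_chain2[OF smooth2_has_derivative_x[OF f] this]
  show ?thesis unfolding shear_def by simp
qed

lemma pdt_shear:
  assumes "smooth2 f"
  shows "pdt (\<lambda>p. f (shear c t0 p)) = (\<lambda>p. pdt f (shear c t0 p) + c * pdx f (shear c t0 p))"
proof
  fix p :: "real \<times> real"
  show "pdt (\<lambda>p. f (shear c t0 p)) p = pdt f (shear c t0 p) + c * pdx f (shear c t0 p)"
    using has_derivative_t_shear[OF assms, of c t0 "snd p" "fst p"]
    by (simp add: pdt_def DERIV_imp_deriv)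
qed

lemma pdx_shear:
  assumes "smooth2 f"
  shows "pdx (\<lambda>p. f (shear c t0 p)) = (\<lambda>p. pdx f (shear c t0 p))"
proof
  fix p :: "real \<times> real"
  show "pdx (\<lambda>p. f (shear c t0 p)) p = pdx f (shear c t0 p)"
    using has_derivative_x_shear[OF assms, of c t0 "fst p" "snd p"]
    by (simp add: pdx_def DERIV_imp_deriv)
qed

lemma iter_pd_shear:
  "smooth2 f \<Longrightarrow> \<exists>g. smooth2 g \<and> iter_pd ds (\<lambda>p. f (shear c t0 p)) = (\<lambda>p. g (shear c t0 p))"
proof (induction ds arbitrary: f rule: rev_induct)
  case (snoc b ds)
  show ?case
  proof (cases b)
    case True
    have "smooth2 (\<lambda>q. pdt f q + c * pdx f q)"
      by (intro smooth2_add_scaled smooth2_pdt smooth2_pdx snoc.prems)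
    then show ?thesis
      using True snoc by (simp add: iter_pd_append pdt_shear)
  next
    case False
    then show ?thesis
      using snoc smooth2_pdx by (simp add: iter_pd_append pdx_shear)
  qed
qed auto

lemma smooth2_shear:
  assumes f: "smooth2 f"
  shows "smooth2 (\<lambda>p. f (shear c t0 p))"
  unfolding smooth2_def
proof (intro allI conjI)
  fix ds t x
  obtain g where g: "smooth2 g" and eq: "iter_pd ds (\<lambda>p. f (shear c t0 p)) = (\<lambda>p. g (shear c t0 p))"
    using iter_pd_shear[OF f] by blast
  show "continuous_on UNIV (iter_pd ds (\<lambda>p. f (shear c t0 p)))"
    unfolding eq using continuous_on_compose2[OF smooth2_continuous_on[OF g] continuous_on_shear] by simp
  show "(\<lambda>s. iter_pd ds (\<lambda>p. f (shear c t0 p)) (s, x)) differentiable at t"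
    unfolding eq using has_derivative_t_shear[OF g] real_differentiable_def by blast
  show "(\<lambda>y. iter_pd ds (\<lambda>p. f (shear c t0 p)) (t, y)) differentiable at x"
    unfolding eq using has_derivative_x_shear[OF g] real_differentiable_def by blast
qed

lemma closure_image_inverse_continuous:
  assumes f: "continuous_on UNIV f" and g: "continuous_on UNIV g"
    and fg: "\<And>x. f (g x) = x" and gf: "\<And>x. g (f x) = x"
  shows "closure (f ` X) = f ` closure X"
proof
  show "f ` closure X \<subseteq> closure (f ` X)"
    using continuous_image_closure_subset[OF f] by blast
  have "g ` closure (f ` X) \<subseteq> closure X"
    using continuous_image_closure_subset[OF g, of "f ` X"] gf by (simp add: image_image)
  then show "closure (f ` X) \<subseteq> f ` closure X"
  proof (intro subsetI)
    fix x assume "x \<in> closure (f ` X)"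
    then have "g x \<in> closure X" using \<open>g ` closure (f ` X) \<subseteq> closure X\<close> by blast
    then show "x \<in> f ` closure X" using fg by (metis imageI)
  qed
qed

lemma support_shear: "{p. \<phi> (shear c t0 p) \<noteq> 0} = shear (- c) t0 ` {p. \<phi> p \<noteq> 0}"
proof (intro set_eqI iffI)
  fix p assume "p \<in> {p. \<phi> (shear c t0 p) \<noteq> 0}"
  then show "p \<in> shear (- c) t0 ` {p. \<phi> p \<noteq> 0}"
    by (metis (mono_tags, lifting) imageI mem_Collect_eq shear_inverse(2))
qed (auto simp: shear_inverse)

lemma closure_support_shear:
  "closure {p. \<phi> (shear c t0 p) \<noteq> 0} = shear (- c) t0 ` closure {p. \<phi> p \<noteq> 0}"
  unfolding support_shear
  by (rule closure_image_inverse_continuous[OF continuous_on_shear continuous_on_shear shear_inverse(2,1)])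

lemma test_fun_shear:
  assumes "test_fun \<phi>"
  shows "test_fun (\<lambda>p. \<phi> (shear c t0 p))"
proof -
  have "compact (shear (- c) t0 ` closure {p. \<phi> p \<noteq> 0})"
    using assms unfolding test_fun_def
    by (blast intro: compact_continuous_image continuous_on_subset[OF continuous_on_shear])
  moreover have "shear (- c) t0 ` closure {p. \<phi> p \<noteq> 0} \<subseteq> {0<..} \<times> UNIV"
    using assms unfolding test_fun_def by (force simp: shear_def)
  ultimately show ?thesis
    using assms unfolding test_fun_def closure_support_shear by (simp add: smooth2_shear)
qed

lemma pd_eq_0_on_open:
  assumes S: "open S" "p \<in> S" and f: "\<And>q. q \<in> S \<Longrightarrow> f q = 0"
  shows "pdt f p = 0" "pdx f p = 0"
proof -
  have "\<forall>\<^sub>F s in nhds (fst p). s \<in> (\<lambda>s. (s, snd p)) -` S"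
    using S by (intro eventually_nhds_in_open continuous_open_vimage continuous_intros) auto
  then have "\<forall>\<^sub>F s in nhds (fst p). f (s, snd p) = (\<lambda>_. 0) s"
    using f by (simp add: eventually_mono)
  from deriv_cong_ev[OF this refl] show "pdt f p = 0" unfolding pdt_def by simp
  have "\<forall>\<^sub>F y in nhds (snd p). y \<in> Pair (fst p) -` S"
    using S by (intro eventually_nhds_in_open continuous_open_vimage continuous_intros) auto
  then have "\<forall>\<^sub>F y in nhds (snd p). f (fst p, y) = (\<lambda>_. 0) y"
    using f by (simp add: eventually_mono)
  from deriv_cong_ev[OF this refl] show "pdx f p = 0" unfolding pdx_def by simp
qed

lemma iter_pd_eq_0_outside_support:
  assumes "p \<notin> closure {p. \<phi> p \<noteq> 0}"
  shows "iter_pd ds \<phi> p = 0"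
  using assms
proof (induction ds arbitrary: p)
  case Nil
  then show ?case using closure_subset[of "{p. \<phi> p \<noteq> 0}"] by auto
next
  case (Cons b ds)
  note vanish = pd_eq_0_on_open[OF open_Compl[OF closed_closure] _ Cons.IH]
  show ?case using vanish[OF Cons.prems[folded Compl_iff]] by simp
qed

lemma test_fun_support_box:
  assumes "test_fun \<phi>"
  obtains a b R where "0 < a" "a < b" "closure {p. \<phi> p \<noteq> 0} \<subseteq> {a<..<b} \<times> {-R<..<R}"
proof -
  define K where "K = closure {p. \<phi> p \<noteq> 0}"
  have K: "compact K" "K \<subseteq> {0<..} \<times> UNIV" using assms unfolding test_fun_def K_def by auto
  obtain r where r: "\<And>q. q \<in> K \<Longrightarrow> norm q \<le> r"
    using compact_imp_bounded[OF K(1)] unfolding bounded_iff by blast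
  have bound: "\<bar>t\<bar> < r + 1" "\<bar>x\<bar> < r + 1" if "(t, x) \<in> K" for t x
    using r[OF that] norm_fst_le[of t x] norm_snd_le[of x t] by simp_all
  show ?thesis
  proof (cases "K = {}")
    case True
    show ?thesis by (rule that[of 1 2 1]) (use True in \<open>simp_all add: K_def[symmetric]\<close>)
  next
    case False
    obtain m where m: "m \<in> fst ` K" "\<And>t. t \<in> fst ` K \<Longrightarrow> m \<le> t"
      using compact_attains_inf[OF compact_continuous_image[OF continuous_on_fst[OF continuous_on_id] K(1)]]
        False by blast
    have "0 < m" "m < r + 1" using m(1) K(2) bound by force+
    moreover have "K \<subseteq> {m / 2<..<r + 1} \<times> {- (r + 1)<..<r + 1}"
      using m(2) bound \<open>0 < m\<close> by (force simp: abs_less_iff)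
    ultimately show ?thesis using that[of "m / 2" "r + 1" "r + 1"] unfolding K_def by simp
  qed
qed

text \<open>The weights against which the pairing with an \<open>L\<^sup>2\<close> profile is absolutely integrable.\<close>
definition Cc_halfplane :: "(real \<times> real \<Rightarrow> real) \<Rightarrow> bool" where
  "Cc_halfplane G \<longleftrightarrow> continuous_on UNIV G \<and> (\<exists>B. \<forall>p. \<bar>G p\<bar> \<le> B) \<and>
     (\<exists>a b R. 0 < a \<and> a < b \<and> (\<forall>t x. t \<le> a \<or> b \<le> t \<or> R \<le> \<bar>x\<bar> \<longrightarrow> G (t, x) = 0))"

lemma Cc_halfplane_iter_pd:
  assumes "test_fun \<phi>"
  shows "Cc_halfplane (iter_pd ds \<phi>)"
proof -
  define K where "K = closure {p. \<phi> p \<noteq> 0}"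
  have "compact K" using assms unfolding test_fun_def K_def by simp
  have cont: "continuous_on UNIV (iter_pd ds \<phi>)"
    using assms unfolding test_fun_def by (simp add: smooth2_iter_pd smooth2_continuous_on)
  have "bounded (iter_pd ds \<phi> ` K)"
    using compact_continuous_image[OF continuous_on_subset[OF cont] \<open>compact K\<close>]
    by (simp add: compact_imp_bounded)
  then obtain B where B: "\<And>q. q \<in> K \<Longrightarrow> \<bar>iter_pd ds \<phi> q\<bar> \<le> B"
    unfolding bounded_iff by auto
  have zero: "iter_pd ds \<phi> q = 0" if "q \<notin> K" for q
    using iter_pd_eq_0_outside_support that unfolding K_def by blast
  have "\<bar>iter_pd ds \<phi> p\<bar> \<le> max B 0" for p
    using B[of p] zero[of p] by (cases "p \<in> K") auto
  moreover obtain a b R where "0 < a" "a < b" "K \<subseteq> {a<..<b} \<times> {-R<..<R}"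
    using test_fun_support_box[OF assms] unfolding K_def by blast
  then have "iter_pd ds \<phi> (t, x) = 0" if "t \<le> a \<or> b \<le> t \<or> R \<le> \<bar>x\<bar>" for t x
    using zero[of "(t, x)"] that subsetD[OF \<open>K \<subseteq> _\<close>, of "(t, x)"] by (force simp: abs_less_iff)
  ultimately show ?thesis
    unfolding Cc_halfplane_def using cont \<open>0 < a\<close> \<open>a < b\<close> by blast
qed

lemma Cc_halfplane_add_scaled:
  assumes F: "Cc_halfplane F" and G: "Cc_halfplane G"
  shows "Cc_halfplane (\<lambda>p. F p + k * G p)"
proof -
  obtain B1 a1 b1 R1 where F': "continuous_on UNIV F" "\<And>p. \<bar>F p\<bar> \<le> B1" "0 < a1" "a1 < b1"
      "\<And>t x. t \<le> a1 \<or> b1 \<le> t \<or> R1 \<le> \<bar>x\<bar> \<Longrightarrow> F (t, x) = 0"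
    using F unfolding Cc_halfplane_def by blast
  obtain B2 a2 b2 R2 where G': "continuous_on UNIV G" "\<And>p. \<bar>G p\<bar> \<le> B2" "0 < a2" "a2 < b2"
      "\<And>t x. t \<le> a2 \<or> b2 \<le> t \<or> R2 \<le> \<bar>x\<bar> \<Longrightarrow> G (t, x) = 0"
    using G unfolding Cc_halfplane_def by blast
  have "\<bar>F p + k * G p\<bar> \<le> B1 + \<bar>k\<bar> * B2" for p
    using abs_triangle_ineq[of "F p" "k * G p"] F'(2)[of p] G'(2)[of p]
      mult_left_mono[of "\<bar>G p\<bar>" B2 "\<bar>k\<bar>"] by (simp add: abs_mult)
  moreover have "F (t, x) + k * G (t, x) = 0"
    if "t \<le> min a1 a2 \<or> max b1 b2 \<le> t \<or> max R1 R2 \<le> \<bar>x\<bar>" for t x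
    using F'(5)[of t x] G'(5)[of t x] that by auto
  moreover have "continuous_on UNIV (\<lambda>p. F p + k * G p)"
    using F'(1) G'(1) by (intro continuous_intros)
  moreover have "0 < min a1 a2" "min a1 a2 < max b1 b2" using F' G' by auto
  ultimately show ?thesis unfolding Cc_halfplane_def by blast
qed

lemma Cc_halfplane_Lop_iter_pd:
  assumes "test_fun \<phi>"
  shows "Cc_halfplane (Lop (iter_pd ds \<phi>))"
proof -
  have "Lop (iter_pd ds \<phi>) = (\<lambda>p. iter_pd ds \<phi> p + (-1) * iter_pd (False # False # ds) \<phi> p)"
    unfolding Lop_def by simp
  then show ?thesis
    by (simp only:) (intro Cc_halfplane_add_scaled Cc_halfplane_iter_pd assms)
qed

section \<open>Pairing with profiles independent of time\<close>

lemma L2_integrable_on_interval: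
  assumes "L2 U"
  shows "integrable lborel (\<lambda>x. indicator {-R..R} x * \<bar>U x\<bar>)"
proof (rule Bochner_Integration.integrable_bound)
  have U: "U \<in> borel_measurable lborel" "integrable lborel (\<lambda>x. (U x)\<^sup>2)"
    using assms unfolding L2_def by auto
  show "integrable lborel (\<lambda>x. (U x)\<^sup>2 + indicator {-R..R} x :: real)"
    using U(2) by (intro Bochner_Integration.integrable_add integrable_real_indicator)
      (auto simp: emeasure_lborel_Icc_eq)
  show "(\<lambda>x. indicator {-R..R} x * \<bar>U x\<bar>) \<in> borel_measurable lborel"
    using U(1) by measurable
  have "\<bar>U x\<bar> \<le> (U x)\<^sup>2 + 1" for x
    using sum_squares_ge_zero[of "\<bar>U x\<bar> - 1/2" 0] by (simp add: power2_eq_square algebra_simps)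
  then show "AE x in lborel. norm (indicator {-R..R} x * \<bar>U x\<bar>) \<le> norm ((U x)\<^sup>2 + indicator {-R..R} x :: real)"
    by (intro AE_I2) (simp add: indicator_def)
qed

lemma pair_integrable:
  assumes U: "L2 U" and G: "Cc_halfplane G"
  shows "integrable (lborel \<Otimes>\<^sub>M lborel) (\<lambda>(t, x). indicator {0<..} t * (U x * G (t, x)))"
proof -
  obtain B a b R where B: "\<And>p. \<bar>G p\<bar> \<le> B" and ab: "0 < a"
    and zero: "\<And>t x. t \<le> a \<or> b \<le> t \<or> R \<le> \<bar>x\<bar> \<Longrightarrow> G (t, x) = 0"
    using G unfolding Cc_halfplane_def by blast
  have Um: "U \<in> borel_measurable lborel" using U unfolding L2_def by simp
  have [measurable]: "G \<in> borel_measurable (lborel \<Otimes>\<^sub>M lborel)"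
    using G unfolding Cc_halfplane_def by (simp add: borel_measurable_continuous_onI lborel_prod)
  define h where "h = (\<lambda>(t, x). B * (indicator {a..b} t * (indicator {-R..R} x * \<bar>U x\<bar>)) :: real)"
  have "integrable (lborel \<Otimes>\<^sub>M lborel) h"
  proof (rule lborel_pair.Fubini_integrable)
    show "h \<in> borel_measurable (lborel \<Otimes>\<^sub>M lborel)" unfolding h_def using Um by measurable
    have "(\<lambda>y. norm (h (t, y))) = (\<lambda>y. (\<bar>B\<bar> * indicator {a..b} t) * (indicator {-R..R} y * \<bar>U y\<bar>))" for t
      unfolding h_def by (auto simp: abs_mult indicator_def)
    then show "integrable lborel (\<lambda>t. \<integral>y. norm (h (t, y)) \<partial>lborel)"
      by (simp add: integrable_real_indicator emeasure_lborel_Icc_eq)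
    show "AE t in lborel. integrable lborel (\<lambda>y. h (t, y))"
      using L2_integrable_on_interval[OF U, of R] by (simp add: h_def)
  qed
  then show ?thesis
  proof (rule Bochner_Integration.integrable_bound)
    show "(\<lambda>(t, x). indicator {0<..} t * (U x * G (t, x))) \<in> borel_measurable (lborel \<Otimes>\<^sub>M lborel)"
      using Um by measurable
    have "\<bar>indicator {0<..} t * (U x * G (t, x))\<bar> \<le> \<bar>h (t, x)\<bar>" for t x
    proof (cases "t \<le> a \<or> b \<le> t \<or> R \<le> \<bar>x\<bar>")
      case False
      then have "t \<in> {a..b}" "x \<in> {-R..R}" "0 < t" using ab by auto
      then have "h (t, x) = B * \<bar>U x\<bar>" "0 < t" by (simp_all add: h_def)
      moreover have "\<bar>U x * G (t, x)\<bar> \<le> \<bar>U x\<bar> * B"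
        unfolding abs_mult by (rule mult_left_mono[OF B]) simp
      ultimately show ?thesis by (simp add: mult.commute)
    qed (simp add: zero)
    then show "AE p in lborel \<Otimes>\<^sub>M lborel.
        norm ((\<lambda>(t, x). indicator {0<..} t * (U x * G (t, x))) p) \<le> norm (h p)"
      by (intro AE_I2) (auto split: prod.split)
  qed
qed

lemma pair_eq_integral_prod:
  assumes "L2 U" "Cc_halfplane G"
  shows "pair (\<lambda>t x. U x) G = (\<integral>(t, x). indicator {0<..} t * (U x * G (t, x)) \<partial>(lborel \<Otimes>\<^sub>M lborel))"
  using lborel_pair.integral_fst'[OF pair_integrable[OF assms]]
  by (simp add: pair_def set_lebesgue_integral_def)

lemma pair_swap_integrals:
  assumes "L2 U" "Cc_halfplane G"
  shows "pair (\<lambda>t x. U x) G = (\<integral>x. U x * (\<integral>t. indicator {0<..} t * G (t, x) \<partial>lborel) \<partial>lborel)"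
  unfolding pair_eq_integral_prod[OF assms]
  using lborel_pair.integral_snd[of "\<lambda>t x. indicator {0<..} t * (U x * G (t, x))",
      OF pair_integrable[OF assms]]
  by (simp add: mult.left_commute)

lemma pair_add_scaled:
  assumes U: "L2 U" and F: "Cc_halfplane F" and G: "Cc_halfplane G"
  shows "pair (\<lambda>t x. U x) (\<lambda>p. F p + k * G p) = pair (\<lambda>t x. U x) F + k * pair (\<lambda>t x. U x) G"
proof -
  have "(\<lambda>(t, x). indicator {0<..} t * (U x * (F (t, x) + k * G (t, x))) :: real) =
     (\<lambda>p. (\<lambda>(t, x). indicator {0<..} t * (U x * F (t, x))) p
        + k * (\<lambda>(t, x). indicator {0<..} t * (U x * G (t, x))) p)"
    by (auto simp: fun_eq_iff algebra_simps)
  then show ?thesis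
    unfolding pair_eq_integral_prod[OF U Cc_halfplane_add_scaled[OF F G]]
      pair_eq_integral_prod[OF U F] pair_eq_integral_prod[OF U G]
    using pair_integrable[OF U F] pair_integrable[OF U G] by simp
qed

lemma pair_const_mult: "pair (\<lambda>t x. k * U x) G = k * pair (\<lambda>t x. U x) G"
  by (simp add: pair_def set_lebesgue_integral_def mult.assoc)

lemma integral_pdt_eq_0:
  assumes F: "smooth2 F" and ab: "0 < a" "a < b"
    and zero: "\<And>t x. t \<le> a \<or> b \<le> t \<Longrightarrow> F (t, x) = 0"
  shows "(\<integral>t. indicator {0<..} t * pdt F (t, x) \<partial>lborel) = 0"
proof -
  have "pdt F (t, x) = 0" if "t < a \<or> b < t" for t
  proof -
    have "open ({..<a} \<times> (UNIV :: real set))" "open ({b<..} \<times> (UNIV :: real set))"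
      by (auto intro: open_Times)
    then show ?thesis
      using that pd_eq_0_on_open(1)[of "{..<a} \<times> UNIV" "(t, x)" F]
        pd_eq_0_on_open(1)[of "{b<..} \<times> UNIV" "(t, x)" F] zero
      by auto
  qed
  then have "(\<lambda>t. indicator {0<..} t * pdt F (t, x)) = (\<lambda>t. indicator {a/2..b+1} t *\<^sub>R pdt F (t, x))"
    using ab by (force simp: indicator_def)
  then have "(\<integral>t. indicator {0<..} t * pdt F (t, x) \<partial>lborel)
      = (\<integral>t. indicator {a/2..b+1} t *\<^sub>R pdt F (t, x) \<partial>lborel)"
    by (rule arg_cong)
  also have "\<dots> = F (b + 1, x) - F (a / 2, x)"
  proof (rule integral_FTC_atLeastAtMost)
    show "a / 2 \<le> b + 1" using ab by simp
    show "((\<lambda>s. F (s, x)) has_vector_derivative pdt F (s, x)) (at s within {a / 2..b + 1})" for s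
      using smooth2_has_derivative_t[OF F, of x s]
      by (simp add: has_real_derivative_iff_has_vector_derivative has_vector_derivative_at_within)
    show "continuous_on {a / 2..b + 1} (\<lambda>s. pdt F (s, x))"
      using smooth2_continuous_on[OF smooth2_pdt[OF F]]
      by (rule continuous_on_compose2[of UNIV "pdt F" _ "\<lambda>s. (s, x)"]) (auto intro: continuous_intros)
  qed
  also have "\<dots> = 0" using zero ab by simp
  finally show ?thesis .
qed

lemma pair_pdt_eq_0:
  assumes U: "L2 U" and F: "smooth2 F" "Cc_halfplane F" "Cc_halfplane (pdt F)"
  shows "pair (\<lambda>t x. U x) (pdt F) = 0"
proof -
  obtain a b R where "0 < a" "a < b" "\<And>t x. t \<le> a \<or> b \<le> t \<or> R \<le> \<bar>x\<bar> \<Longrightarrow> F (t, x) = 0"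
    using F(2) unfolding Cc_halfplane_def by blast
  then have "(\<integral>t. indicator {0<..} t * pdt F (t, x) \<partial>lborel) = 0" for x
    by (intro integral_pdt_eq_0[OF F(1)]) blast+
  then show ?thesis unfolding pair_swap_integrals[OF U F(3)] by simp
qed

lemma Lop_pdt_commute:
  assumes "smooth2 \<psi>"
  shows "Lop (pdt \<psi>) = pdt (Lop \<psi>)"
proof -
  have "Lop \<psi> = (\<lambda>p. \<psi> p + (-1) * pdx (pdx \<psi>) p)" unfolding Lop_def by simp
  then have "pdt (Lop \<psi>) = (\<lambda>p. pdt \<psi> p + (-1) * pdt (pdx (pdx \<psi>)) p)"
    using pdt_add_scaled[OF assms smooth2_pdx[OF smooth2_pdx[OF assms]], of "-1"] by (simp only:)
  moreover have "pdx (pdx (pdt \<psi>)) = pdt (pdx (pdx \<psi>))"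
    using pdx_pdt_commute[OF assms] pdx_pdt_commute[OF smooth2_pdx[OF assms]] by simp
  ultimately show ?thesis unfolding Lop_def[of "pdt \<psi>"] by simp
qed

lemma pair_Lop_pdt_eq_0:
  assumes U: "L2 U" and \<psi>: "test_fun \<psi>"
  shows "pair (\<lambda>t x. U x) (Lop (pdt \<psi>)) = 0"
proof -
  have s: "smooth2 \<psi>" using \<psi> unfolding test_fun_def by simp
  have "Cc_halfplane (Lop (pdt \<psi>))"
    using Cc_halfplane_Lop_iter_pd[OF \<psi>, of "[True]"] by simp
  moreover have "Cc_halfplane (Lop \<psi>)"
    using Cc_halfplane_Lop_iter_pd[OF \<psi>, of "[]"] by simp
  moreover have "smooth2 (Lop \<psi>)"
    unfolding Lop_def using smooth2_add_scaled[OF s smooth2_pdx[OF smooth2_pdx[OF s]], of "-1"] by simp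
  ultimately show ?thesis
    unfolding Lop_pdt_commute[OF s] by (intro pair_pdt_eq_0 U)
qed

lemma pair_translate:
  "pair (\<lambda>t x. F (x - c * (t - t0))) g = pair (\<lambda>t x. F x) (\<lambda>p. g (shear c t0 p))"
proof -
  have "(\<integral>x. F (x - s) * g (t, x) \<partial>lborel) = (\<integral>x. F x * g (t, x + s) \<partial>lborel)" for s t
    using lborel_integral_real_affine[of 1 "\<lambda>x. F (x - s) * g (t, x)" s] by (simp add: add.commute)
  then show ?thesis unfolding pair_def shear_def by simp
qed

lemma Lop_pdt_shear:
  assumes \<phi>: "smooth2 \<phi>"
  shows "(\<lambda>p. Lop (pdt \<phi>) (shear c t0 p)) =
    (\<lambda>p. Lop (pdt (\<lambda>q. \<phi> (shear c t0 q))) p + (- c) * Lop (pdx (\<lambda>q. \<phi> (shear c t0 q))) p)"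
proof -
  define G where "G = (\<lambda>q. pdt \<phi> q + c * pdx \<phi> q)"
  have G: "smooth2 G" unfolding G_def by (intro smooth2_add_scaled smooth2_pdt smooth2_pdx \<phi>)
  have G2: "pdx (pdx G) = (\<lambda>q. pdx (pdx (pdt \<phi>)) q + c * pdx (pdx (pdx \<phi>)) q)"
    unfolding G_def using iter_pd_add_scaled[OF smooth2_pdt[OF \<phi>] smooth2_pdx[OF \<phi>], of "[False, False]" c]
    by simp
  have dt: "pdt (\<lambda>q. \<phi> (shear c t0 q)) = (\<lambda>p. G (shear c t0 p))"
    unfolding G_def by (rule pdt_shear[OF \<phi>])
  have "pdx (pdx (\<lambda>p. G (shear c t0 p))) = (\<lambda>p. pdx (pdx G) (shear c t0 p))"
    using G by (simp add: pdx_shear smooth2_pdx)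
  moreover have "pdx (\<lambda>q. \<phi> (shear c t0 q)) = (\<lambda>p. pdx \<phi> (shear c t0 p))"
    "pdx (pdx (pdx (\<lambda>q. \<phi> (shear c t0 q)))) = (\<lambda>p. pdx (pdx (pdx \<phi>)) (shear c t0 p))"
    using \<phi> by (simp_all add: pdx_shear smooth2_pdx)
  ultimately show ?thesis
    unfolding Lop_def dt G2 by (simp add: G_def algebra_simps)
qed

lemma CH_rest_translate:
  assumes "smooth2 \<phi>"
  shows "CH_rest (\<lambda>t x. U (x - c * (t - t0))) (\<lambda>t x. Ux (x - c * (t - t0)))
           (\<lambda>t x. V (x - c * (t - t0))) (\<lambda>t x. Vx (x - c * (t - t0)))
           (\<lambda>t x. W (x - c * (t - t0))) (\<lambda>t x. Wx (x - c * (t - t0))) \<phi>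
       = CH_rest (\<lambda>t. U) (\<lambda>t. Ux) (\<lambda>t. V) (\<lambda>t. Vx) (\<lambda>t. W) (\<lambda>t. Wx) (\<lambda>q. \<phi> (shear c t0 q))"
  using assms unfolding CH_rest_def
    pair_translate[of "\<lambda>y. Ux y * (V y + W y)"] pair_translate[of "\<lambda>y. (U y)\<^sup>2"]
    pair_translate[of "\<lambda>y. 3/2 * (U y)\<^sup>2 + 1/2 * (Ux y)\<^sup>2 + U y * (V y + W y)
      + Ux y * (Vx y + Wx y) + 1/2 * ((V y)\<^sup>2 + (W y)\<^sup>2 - (Vx y)\<^sup>2 - (Wx y)\<^sup>2)"]
  by (simp add: pdx_shear smooth2_pdx)

lemma travelling_wave_weak_eq:
  fixes U V W Ux Vx Wx :: "real \<Rightarrow> real"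
  assumes U: "L2 U" and \<phi>: "test_fun \<phi>"
    and eq: "\<And>\<psi>. test_fun \<psi> \<Longrightarrow> pair (\<lambda>t x. - c * U x) (Lop (pdx \<psi>))
          + CH_rest (\<lambda>t. U) (\<lambda>t. Ux) (\<lambda>t. V) (\<lambda>t. Vx) (\<lambda>t. W) (\<lambda>t. Wx) \<psi> = 0"
  shows "pair (\<lambda>t x. U (x - c * (t - t0))) (Lop (pdt \<phi>))
    + CH_rest (\<lambda>t x. U (x - c * (t - t0))) (\<lambda>t x. Ux (x - c * (t - t0)))
           (\<lambda>t x. V (x - c * (t - t0))) (\<lambda>t x. Vx (x - c * (t - t0)))
           (\<lambda>t x. W (x - c * (t - t0))) (\<lambda>t x. Wx (x - c * (t - t0))) \<phi> = 0"
proof -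
  define \<psi> where "\<psi> = (\<lambda>q. \<phi> (shear c t0 q))"
  have s: "smooth2 \<phi>" using \<phi> unfolding test_fun_def by simp
  have \<psi>: "test_fun \<psi>" unfolding \<psi>_def by (rule test_fun_shear[OF \<phi>])
  have "pair (\<lambda>t x. U (x - c * (t - t0))) (Lop (pdt \<phi>))
      = pair (\<lambda>t x. U x) (\<lambda>p. Lop (pdt \<psi>) p + (- c) * Lop (pdx \<psi>) p)"
    unfolding pair_translate Lop_pdt_shear[OF s] \<psi>_def ..
  also have "\<dots> = pair (\<lambda>t x. U x) (Lop (pdt \<psi>)) + (- c) * pair (\<lambda>t x. U x) (Lop (pdx \<psi>))"
    using Cc_halfplane_Lop_iter_pd[OF \<psi>, of "[True]"] Cc_halfplane_Lop_iter_pd[OF \<psi>, of "[False]"]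
    by (intro pair_add_scaled U) simp_all
  also have "\<dots> = pair (\<lambda>t x. - c * U x) (Lop (pdx \<psi>))"
    unfolding pair_Lop_pdt_eq_0[OF U \<psi>] pair_const_mult[of "- c"] by simp
  finally show ?thesis
    unfolding CH_rest_translate[OF s] \<psi>_def[symmetric] using eq[OF \<psi>] by simp
qed

section \<open>Continuity of translations in \<open>L\<^sup>1\<close> and \<open>L\<^sup>2\<close>\<close>

lemma integral_lborel_translate: "(\<integral>x. g (x + h) \<partial>lborel) = (\<integral>x. g x \<partial>lborel)"
  for g :: "real \<Rightarrow> real"
  using lborel_integral_real_affine[of 1 g h] by (simp add: add.commute)

lemma integrable_lborel_translate: "integrable lborel g \<Longrightarrow> integrable lborel (\<lambda>x. g (x + h))"
  for g :: "real \<Rightarrow> real"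
  using lborel_integrable_real_affine[of g 1 h] by (simp add: add.commute)

definition L1_shift_continuous :: "(real \<Rightarrow> real) \<Rightarrow> bool" where
  "L1_shift_continuous f \<longleftrightarrow>
     (\<forall>e>0. \<exists>d>0. \<forall>h. \<bar>h\<bar> < d \<longrightarrow> (\<integral>x. \<bar>f (x + h) - f x\<bar> \<partial>lborel) < e)"

lemma L1_shift_continuous_add:
  assumes f: "integrable lborel f" and g: "integrable lborel g"
    and "L1_shift_continuous f" "L1_shift_continuous g"
  shows "L1_shift_continuous (\<lambda>x. f x + g x)"
  unfolding L1_shift_continuous_def
proof (intro allI impI)
  fix e :: real assume "e > 0"
  then have "e / 2 > 0" by simp
  then obtain d1 d2 where d: "d1 > 0" "d2 > 0"
    "\<And>h. \<bar>h\<bar> < d1 \<Longrightarrow> (\<integral>x. \<bar>f (x + h) - f x\<bar> \<partial>lborel) < e / 2"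
    "\<And>h. \<bar>h\<bar> < d2 \<Longrightarrow> (\<integral>x. \<bar>g (x + h) - g x\<bar> \<partial>lborel) < e / 2"
    using assms(3,4) unfolding L1_shift_continuous_def by blast
  have "(\<integral>x. \<bar>f (x + h) + g (x + h) - (f x + g x)\<bar> \<partial>lborel) < e" if h: "\<bar>h\<bar> < min d1 d2" for h
  proof -
    have int: "integrable lborel (\<lambda>x. \<bar>f (x + h) - f x\<bar>)" "integrable lborel (\<lambda>x. \<bar>g (x + h) - g x\<bar>)"
      by (intro integrable_abs Bochner_Integration.integrable_diff integrable_lborel_translate f g)+
    have "(\<integral>x. \<bar>f (x + h) + g (x + h) - (f x + g x)\<bar> \<partial>lborel)
        \<le> (\<integral>x. \<bar>f (x + h) - f x\<bar> + \<bar>g (x + h) - g x\<bar> \<partial>lborel)"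
      using int by (intro integral_mono) (auto intro!: integrable_abs Bochner_Integration.integrable_diff
        Bochner_Integration.integrable_add integrable_lborel_translate f g)
    also have "\<dots> = (\<integral>x. \<bar>f (x + h) - f x\<bar> \<partial>lborel) + (\<integral>x. \<bar>g (x + h) - g x\<bar> \<partial>lborel)"
      using int by simp
    also have "\<dots> < e / 2 + e / 2" using d(3,4) h by (intro add_strict_mono) auto
    finally show ?thesis by simp
  qed
  then show "\<exists>d>0. \<forall>h. \<bar>h\<bar> < d \<longrightarrow> (\<integral>x. \<bar>f (x + h) + g (x + h) - (f x + g x)\<bar> \<partial>lborel) < e"
    using d(1,2) by (intro exI[of _ "min d1 d2"]) auto
qed

lemma L1_shift_continuous_mult_const:
  assumes "L1_shift_continuous f"
  shows "L1_shift_continuous (\<lambda>x. f x * c)"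
  unfolding L1_shift_continuous_def
proof (intro allI impI)
  fix e :: real assume "e > 0"
  then have "e / (\<bar>c\<bar> + 1) > 0" by simp
  then obtain d where d: "d > 0" "\<And>h. \<bar>h\<bar> < d \<Longrightarrow> (\<integral>x. \<bar>f (x + h) - f x\<bar> \<partial>lborel) < e / (\<bar>c\<bar> + 1)"
    using assms unfolding L1_shift_continuous_def by blast
  have "(\<integral>x. \<bar>f (x + h) * c - f x * c\<bar> \<partial>lborel) < e" if "\<bar>h\<bar> < d" for h
  proof -
    have "(\<lambda>x. \<bar>f (x + h) * c - f x * c\<bar>) = (\<lambda>x. \<bar>c\<bar> * \<bar>f (x + h) - f x\<bar>)"
      by (simp add: fun_eq_iff abs_mult[symmetric] algebra_simps)
    then have "(\<integral>x. \<bar>f (x + h) * c - f x * c\<bar> \<partial>lborel) = \<bar>c\<bar> * (\<integral>x. \<bar>f (x + h) - f x\<bar> \<partial>lborel)"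
      by simp
    also have "\<dots> \<le> \<bar>c\<bar> * (e / (\<bar>c\<bar> + 1))" using d(2)[OF that] by (intro mult_left_mono) auto
    also have "\<dots> < e" using \<open>e > 0\<close> by (simp add: field_simps)
    finally show ?thesis .
  qed
  then show "\<exists>d>0. \<forall>h. \<bar>h\<bar> < d \<longrightarrow> (\<integral>x. \<bar>f (x + h) * c - f x * c\<bar> \<partial>lborel) < e"
    using d(1) by blast
qed

lemma L1_shift_continuous_limit:
  fixes f :: "real \<Rightarrow> real" and s :: "nat \<Rightarrow> real \<Rightarrow> real"
  assumes f: "integrable lborel f" and s: "\<And>i. integrable lborel (s i)"
    and cont: "\<And>i. L1_shift_continuous (s i)"
    and lim: "\<And>x. (\<lambda>i. s i x) \<longlonglongrightarrow> f x" and bound: "\<And>i x. \<bar>s i x\<bar> \<le> 2 * \<bar>f x\<bar>"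
  shows "L1_shift_continuous f"
  unfolding L1_shift_continuous_def
proof (intro allI impI)
  fix e :: real assume "e > 0"
  have "(\<lambda>i. \<integral>x. \<bar>s i x - f x\<bar> \<partial>lborel) \<longlonglongrightarrow> (\<integral>x. 0 \<partial>(lborel::real measure))"
  proof (rule integral_dominated_convergence[where w = "\<lambda>x. 3 * \<bar>f x\<bar>"])
    have "(\<lambda>i. \<bar>s i x - f x\<bar>) \<longlonglongrightarrow> \<bar>f x - f x\<bar>" for x
      by (intro tendsto_intros lim)
    then show "AE x in lborel. (\<lambda>i. \<bar>s i x - f x\<bar>) \<longlonglongrightarrow> 0"
      by simp
    show "AE x in lborel. norm \<bar>s i x - f x\<bar> \<le> 3 * \<bar>f x\<bar>" for i
    proof (intro AE_I2)
      fix x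
      have "\<bar>s i x - f x\<bar> \<le> \<bar>s i x\<bar> + \<bar>f x\<bar>" by (rule abs_triangle_ineq4)
      then show "norm \<bar>s i x - f x\<bar> \<le> 3 * \<bar>f x\<bar>" using bound[of i x] by simp
    qed
  qed (use f s in auto)
  moreover have "e / 3 > 0" using \<open>e > 0\<close> by simp
  ultimately have "\<forall>\<^sub>F i in sequentially. (\<integral>x. \<bar>s i x - f x\<bar> \<partial>lborel) < e / 3"
    by (intro order_tendstoD(2)) auto
  then obtain i where i: "(\<integral>x. \<bar>s i x - f x\<bar> \<partial>lborel) < e / 3"
    unfolding eventually_sequentially by blast
  obtain d where d: "d > 0" "\<And>h. \<bar>h\<bar> < d \<Longrightarrow> (\<integral>x. \<bar>s i (x + h) - s i x\<bar> \<partial>lborel) < e / 3"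
    using cont[of i] \<open>e / 3 > 0\<close> unfolding L1_shift_continuous_def by blast
  have "(\<integral>x. \<bar>f (x + h) - f x\<bar> \<partial>lborel) < e" if h: "\<bar>h\<bar> < d" for h
  proof -
    have iA: "integrable lborel (\<lambda>x. \<bar>s i x - f x\<bar>)"
      by (intro integrable_abs Bochner_Integration.integrable_diff s f)
    have iA': "integrable lborel (\<lambda>x. \<bar>s i (x + h) - f (x + h)\<bar>)"
      using integrable_lborel_translate[OF iA] by simp
    have iB: "integrable lborel (\<lambda>x. \<bar>s i (x + h) - s i x\<bar>)"
      by (intro integrable_abs Bochner_Integration.integrable_diff integrable_lborel_translate s)
    have "(\<integral>x. \<bar>f (x + h) - f x\<bar> \<partial>lborel)
        \<le> (\<integral>x. \<bar>s i (x + h) - f (x + h)\<bar> + \<bar>s i (x + h) - s i x\<bar> + \<bar>s i x - f x\<bar> \<partial>lborel)"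
      by (rule integral_mono)
        (auto intro!: Bochner_Integration.integrable_add iA iA' iB integrable_abs
          Bochner_Integration.integrable_diff integrable_lborel_translate f)
    also have "\<dots> = (\<integral>x. \<bar>s i (x + h) - f (x + h)\<bar> \<partial>lborel) + (\<integral>x. \<bar>s i (x + h) - s i x\<bar> \<partial>lborel)
        + (\<integral>x. \<bar>s i x - f x\<bar> \<partial>lborel)"
      using iA iA' iB by simp
    also have "(\<integral>x. \<bar>s i (x + h) - f (x + h)\<bar> \<partial>lborel) = (\<integral>x. \<bar>s i x - f x\<bar> \<partial>lborel)"
      by (rule integral_lborel_translate[of "\<lambda>x. \<bar>s i x - f x\<bar>"])
    finally show ?thesis using i d(2)[OF h] by linarith
  qed
  then show "\<exists>d>0. \<forall>h. \<bar>h\<bar> < d \<longrightarrow> (\<integral>x. \<bar>f (x + h) - f x\<bar> \<partial>lborel) < e"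
    using d(1) by blast
qed

lemma bounded_borel_compact_open_approx:
  fixes B :: "real set"
  assumes B: "B \<in> sets borel" "bounded B" and e: "e > 0"
  obtains F G where "compact F" "open G" "F \<subseteq> B" "B \<subseteq> G"
    "G - F \<in> sets borel" "emeasure lborel (G - F) < \<infinity>" "measure lborel (G - F) < e"
proof -
  have Bl: "B \<in> sets lebesgue" using B by simp
  obtain F where F: "closed F" "F \<subseteq> B" "B - F \<in> lmeasurable" "emeasure lebesgue (B - F) < ennreal (e / 2)"
    using sets_lebesgue_inner_closed[OF Bl] e by (metis half_gt_zero)
  obtain G where G: "open G" "B \<subseteq> G" "G - B \<in> lmeasurable" "emeasure lebesgue (G - B) < ennreal (e / 2)"
    using sets_lebesgue_outer_open[OF Bl] e by (metis half_gt_zero)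
  have "compact F" using F(1,2) B(2) by (meson bounded_subset compact_eq_bounded_closed)
  have D: "G - F \<in> sets borel" using F(1) G(1) by (intro sets.Diff borel_open borel_closed)
  have sub: "G - F \<subseteq> (G - B) \<union> (B - F)" using F(2) G(2) by auto
  have Un: "(G - B) \<union> (B - F) \<in> fmeasurable lebesgue" using F(3) G(3) by (rule fmeasurable.Un[rotated])
  have "measure lebesgue (G - F) \<le> measure lebesgue ((G - B) \<union> (B - F))"
    using D by (intro measure_mono_fmeasurable[OF sub _ Un]) simp
  also have "\<dots> \<le> measure lebesgue (G - B) + measure lebesgue (B - F)"
    using F(3) G(3) by (intro measure_Un_le fmeasurableD)
  also have "\<dots> < e / 2 + e / 2"
    using F(3,4) G(3,4) e by (intro add_strict_mono) (simp_all add: emeasure_eq_measure2 ennreal_less_iff)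
  finally have "measure lborel (G - F) < e" using D by simp
  moreover have "G - F \<in> fmeasurable lebesgue" using D by (intro fmeasurableI2[OF Un sub]) simp
  then have "emeasure lborel (G - F) < \<infinity>" using D by (simp add: fmeasurable_def)
  ultimately show ?thesis using that \<open>compact F\<close> G(1,2) F(2) D by blast
qed

lemma indicator_translate_diff_le:
  assumes "F \<subseteq> B" "B \<subseteq> G" "x + h \<in> F \<Longrightarrow> x \<in> G" "x \<in> F \<Longrightarrow> x + h \<in> G"
  shows "\<bar>indicator B (x + h) - indicator B x\<bar> \<le> indicator (G - F) (x + h) + (indicator (G - F) x :: real)"
  using assms by (auto simp: indicator_def)

text \<open>A compact set stays inside an open neighbourhood under small translations, so the
  translate of a bounded Borel set differs from it only within a set of small measure.\<close>
lemma L1_shift_continuous_indicator_bounded: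
  assumes B: "B \<in> sets borel" "bounded B"
  shows "L1_shift_continuous (indicator B :: real \<Rightarrow> real)"
  unfolding L1_shift_continuous_def
proof (intro allI impI)
  fix e :: real assume "e > 0"
  then obtain F G where FG: "compact F" "open G" "F \<subseteq> B" "B \<subseteq> G" "G - F \<in> sets borel"
      "emeasure lborel (G - F) < \<infinity>" "measure lborel (G - F) < e / 2"
    using bounded_borel_compact_open_approx[OF B] by (metis half_gt_zero)
  define d where "d = (if F = {} \<or> - G = {} then 1 else setdist F (- G))"
  have "d > 0"
    using FG(1-4) setdist_gt_0_compact_closed[of F "- G"] unfolding d_def by auto
  have inG: "x + h \<in> G" if "x \<in> F" "\<bar>h\<bar> < d" for x h
  proof (rule ccontr)
    assume "x + h \<notin> G"
    then have "setdist F (- G) \<le> dist x (x + h)" "\<not> (F = {} \<or> - G = {})"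
      using that(1) by (auto intro: setdist_le_dist)
    then show False using that(2) unfolding d_def by (simp add: dist_real_def)
  qed
  have intD: "integrable lborel (indicator (G - F) :: real \<Rightarrow> real)"
    using FG(5,6) by (intro integrable_real_indicator) auto
  have intB: "integrable lborel (indicator B :: real \<Rightarrow> real)"
    using B by (intro integrable_real_indicator emeasure_bounded_finite) simp_all
  have "(\<integral>x. \<bar>indicator B (x + h) - indicator B x\<bar> \<partial>lborel) < e" if h: "\<bar>h\<bar> < d" for h
  proof -
    have "(\<integral>x. \<bar>indicator B (x + h) - indicator B x\<bar> \<partial>lborel)
        \<le> (\<integral>x. indicator (G - F) (x + h) + (indicator (G - F) x :: real) \<partial>lborel)"
    proof (rule integral_mono)
      show "\<bar>indicator B (x + h) - indicator B x\<bar> \<le> indicator (G - F) (x + h) + (indicator (G - F) x :: real)"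
        for x
        using inG[of x h] inG[of "x + h" "- h"] h FG(3,4) by (intro indicator_translate_diff_le) auto
    qed (auto intro!: integrable_abs Bochner_Integration.integrable_diff Bochner_Integration.integrable_add
          integrable_lborel_translate intB intD)
    also have "\<dots> = 2 * measure lborel (G - F)"
      using intD integrable_lborel_translate[OF intD, of h] integral_lborel_translate[of "indicator (G - F)" h]
      by simp
    finally show ?thesis using FG(7) by simp
  qed
  then show "\<exists>d>0. \<forall>h. \<bar>h\<bar> < d \<longrightarrow> (\<integral>x. \<bar>indicator B (x + h) - indicator B x\<bar> \<partial>lborel) < e"
    using \<open>d > 0\<close> by blast
qed

lemma L1_shift_continuous_indicator:
  assumes A: "A \<in> sets lborel" and fin: "emeasure lborel A < \<infinity>"
  shows "L1_shift_continuous (indicator A :: real \<Rightarrow> real)"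
proof (rule L1_shift_continuous_limit[where s = "\<lambda>n. indicator (A \<inter> {- real n..real n})"])
  show "integrable lborel (indicator A :: real \<Rightarrow> real)" using A fin by (rule integrable_real_indicator)
  show "integrable lborel (indicator (A \<inter> {- real n..real n}) :: real \<Rightarrow> real)" for n
    using A by (intro integrable_real_indicator emeasure_bounded_finite) auto
  show "L1_shift_continuous (indicator (A \<inter> {- real n..real n}) :: real \<Rightarrow> real)" for n
    using A by (intro L1_shift_continuous_indicator_bounded) auto
  show "(\<lambda>n. indicator (A \<inter> {- real n..real n}) x) \<longlonglongrightarrow> (indicator A x :: real)" for x
  proof (rule tendsto_eventually)
    obtain N :: nat where "\<bar>x\<bar> \<le> real N" using real_arch_simple by blast
    then have "\<forall>n\<ge>N. indicator (A \<inter> {- real n..real n}) x = (indicator A x :: real)"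
      by (auto simp: indicator_def)
    then show "\<forall>\<^sub>F n in sequentially. indicator (A \<inter> {- real n..real n}) x = (indicator A x :: real)"
      unfolding eventually_sequentially by blast
  qed
qed (simp add: indicator_def)

lemma L1_shift_continuous_integrable:
  fixes f :: "real \<Rightarrow> real"
  assumes "integrable lborel f"
  shows "L1_shift_continuous f"
  using assms
proof (induction rule: integrable_induct)
  case (base A c)
  then show ?case
    using L1_shift_continuous_mult_const[OF L1_shift_continuous_indicator] by simp
next
  case (add f g)
  then show ?case by (intro L1_shift_continuous_add) auto
next
  case (lim f s)
  show ?case
  proof (rule L1_shift_continuous_limit[where s = s])
    show "\<bar>s i x\<bar> \<le> 2 * \<bar>f x\<bar>" for i x using lim by simp
  qed (use lim in simp_all)
qed

definition truncate :: "nat \<Rightarrow> (real \<Rightarrow> real) \<Rightarrow> real \<Rightarrow> real" where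
  "truncate N f x = indicator {- real N..real N} x * max (- real N) (min (real N) (f x))"

lemma truncate_bounds:
  "\<bar>truncate N f x\<bar> \<le> real N" "\<bar>truncate N f x\<bar> \<le> \<bar>f x\<bar>" "\<bar>f x - truncate N f x\<bar> \<le> \<bar>f x\<bar>"
  unfolding truncate_def by (auto simp: indicator_def)

lemma truncate_measurable [measurable]:
  "f \<in> borel_measurable lborel \<Longrightarrow> truncate N f \<in> borel_measurable lborel"
  unfolding truncate_def[abs_def] by (simp add: measurable_lborel1)

lemma integrable_truncate:
  assumes "f \<in> borel_measurable lborel"
  shows "integrable lborel (truncate N f)"
proof (rule Bochner_Integration.integrable_bound)
  show "integrable lborel (\<lambda>x. real N * indicator {- real N..real N} x :: real)"
    by (intro integrable_mult_right integrable_real_indicator) (auto simp: emeasure_lborel_Icc_eq)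
  show "AE x in lborel. norm (truncate N f x) \<le> norm (real N * indicator {- real N..real N} x :: real)"
    by (rule AE_I2) (auto simp: truncate_def indicator_def)
  show "truncate N f \<in> borel_measurable lborel" using assms by (rule truncate_measurable)
qed

lemma L2_truncate_approx:
  assumes f: "L2 f" and e: "e > 0"
  obtains N where "(\<integral>x. (f x - truncate N f x)\<^sup>2 \<partial>lborel) < e"
proof -
  have fm: "f \<in> borel_measurable lborel" and fi: "integrable lborel (\<lambda>x. (f x)\<^sup>2)"
    using f unfolding L2_def by auto
  have "(\<lambda>N. \<integral>x. (f x - truncate N f x)\<^sup>2 \<partial>lborel) \<longlonglongrightarrow> (\<integral>x. 0 \<partial>(lborel::real measure))"
  proof (rule integral_dominated_convergence[where w = "\<lambda>x. (f x)\<^sup>2"])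
    show "AE x in lborel. (\<lambda>N. (f x - truncate N f x)\<^sup>2) \<longlonglongrightarrow> 0"
    proof (intro AE_I2 tendsto_eventually)
      fix x
      obtain N0 :: nat where "max \<bar>x\<bar> \<bar>f x\<bar> \<le> real N0" using real_arch_simple by blast
      then have "\<forall>N\<ge>N0. (f x - truncate N f x)\<^sup>2 = 0"
        by (auto simp: truncate_def indicator_def abs_le_iff)
      then show "\<forall>\<^sub>F N in sequentially. (f x - truncate N f x)\<^sup>2 = 0"
        unfolding eventually_sequentially by blast
    qed
    show "AE x in lborel. norm ((f x - truncate N f x)\<^sup>2) \<le> (f x)\<^sup>2" for N
      using truncate_bounds(3)[of f _ N] by (intro AE_I2) (simp add: abs_le_square_iff)
  qed (use fm fi in auto)
  then have "\<forall>\<^sub>F N in sequentially. (\<integral>x. (f x - truncate N f x)\<^sup>2 \<partial>lborel) < e"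
    using e by (intro order_tendstoD(2)) auto
  then show ?thesis using that unfolding eventually_sequentially by blast
qed

lemma square_sum3_le: "(a + b + c)\<^sup>2 \<le> 3 * (a\<^sup>2 + b\<^sup>2 + c\<^sup>2)" for a b c :: real
proof -
  have "0 \<le> (a - b)\<^sup>2 + (b - c)\<^sup>2 + (a - c)\<^sup>2" by simp
  then show ?thesis by (simp add: power2_eq_square algebra_simps)
qed

lemma integrable_square_diff_translate:
  fixes g :: "real \<Rightarrow> real"
  assumes "g \<in> borel_measurable lborel" "integrable lborel (\<lambda>x. (g x)\<^sup>2)"
  shows "integrable lborel (\<lambda>x. (g (x + h) - g x)\<^sup>2)"
proof (rule Bochner_Integration.integrable_bound)
  have [measurable]: "g \<in> borel_measurable borel" using assms(1) by (simp add: measurable_lborel1)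
  show "integrable lborel (\<lambda>x. 2 * ((g (x + h))\<^sup>2 + (g x)\<^sup>2))"
    using assms(2) by (intro integrable_mult_right Bochner_Integration.integrable_add integrable_lborel_translate)
  show "(\<lambda>x. (g (x + h) - g x)\<^sup>2) \<in> borel_measurable lborel" by measurable
  have "(a - b)\<^sup>2 \<le> 2 * (a\<^sup>2 + b\<^sup>2)" for a b :: real
    using sum_squares_ge_zero[of "a + b" 0] by (simp add: power2_eq_square algebra_simps)
  then show "AE x in lborel. norm ((g (x + h) - g x)\<^sup>2) \<le> norm (2 * ((g (x + h))\<^sup>2 + (g x)\<^sup>2))"
    by (intro AE_I2) simp
qed

lemma L2_shift_continuous_bounded:
  fixes g :: "real \<Rightarrow> real"
  assumes g: "integrable lborel g" and M: "\<And>x. \<bar>g x\<bar> \<le> M" and e: "e > 0"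
  obtains d where "d > 0" "\<And>h. \<bar>h\<bar> < d \<Longrightarrow> (\<integral>x. (g (x + h) - g x)\<^sup>2 \<partial>lborel) < e"
proof -
  have "0 \<le> M" using M[of 0] abs_ge_zero[of "g 0"] by linarith
  then have "e / (2 * M + 1) > 0" using e by simp
  then obtain d where d: "d > 0" "\<And>h. \<bar>h\<bar> < d \<Longrightarrow> (\<integral>x. \<bar>g (x + h) - g x\<bar> \<partial>lborel) < e / (2 * M + 1)"
    using L1_shift_continuous_integrable[OF g] unfolding L1_shift_continuous_def by blast
  have "(\<integral>x. (g (x + h) - g x)\<^sup>2 \<partial>lborel) < e" if h: "\<bar>h\<bar> < d" for h
  proof -
    have int: "integrable lborel (\<lambda>x. \<bar>g (x + h) - g x\<bar>)"
      by (intro integrable_abs Bochner_Integration.integrable_diff integrable_lborel_translate g)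
    have pw: "(g (x + h) - g x)\<^sup>2 \<le> 2 * M * \<bar>g (x + h) - g x\<bar>" for x
    proof -
      have "\<bar>g (x + h) - g x\<bar> \<le> 2 * M" using M[of "x + h"] M[of x] by linarith
      then have "\<bar>g (x + h) - g x\<bar> * \<bar>g (x + h) - g x\<bar> \<le> 2 * M * \<bar>g (x + h) - g x\<bar>"
        by (rule mult_right_mono) simp
      then show ?thesis by (simp add: power2_eq_square)
    qed
    have "integrable lborel (\<lambda>x. (g (x + h) - g x)\<^sup>2)"
    proof (rule Bochner_Integration.integrable_bound[OF integrable_mult_right[OF int, of "2 * M"]])
      show "(\<lambda>x. (g (x + h) - g x)\<^sup>2) \<in> borel_measurable lborel"
        using g by (simp add: measurable_lborel1 borel_measurable_integrable)
      show "AE x in lborel. norm ((g (x + h) - g x)\<^sup>2) \<le> norm (2 * M * \<bar>g (x + h) - g x\<bar>)"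
        using pw \<open>0 \<le> M\<close> by (intro AE_I2) simp
    qed
    then have "(\<integral>x. (g (x + h) - g x)\<^sup>2 \<partial>lborel) \<le> 2 * M * (\<integral>x. \<bar>g (x + h) - g x\<bar> \<partial>lborel)"
      using integral_mono[OF _ integrable_mult_right[OF int] pw] by simp
    also have "\<dots> \<le> 2 * M * (e / (2 * M + 1))"
      using d(2)[OF h] \<open>0 \<le> M\<close> by (intro mult_left_mono) auto
    also have "\<dots> < e" using e \<open>0 \<le> M\<close> by (simp add: field_simps)
    finally show ?thesis .
  qed
  then show ?thesis using that d(1) by blast
qed

lemma L2_shift_continuous:
  assumes f: "L2 f" and e: "e > 0"
  obtains d where "d > 0" "\<And>h. \<bar>h\<bar> < d \<Longrightarrow> (\<integral>x. (f (x + h) - f x)\<^sup>2 \<partial>lborel) < e"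
proof -
  have fm: "f \<in> borel_measurable lborel" and fi: "integrable lborel (\<lambda>x. (f x)\<^sup>2)"
    using f unfolding L2_def by auto
  obtain N where N: "(\<integral>x. (f x - truncate N f x)\<^sup>2 \<partial>lborel) < e / 9"
    using L2_truncate_approx[OF f, of "e / 9"] e by auto
  define g where "g = truncate N f"
  obtain d where d: "d > 0" "\<And>h. \<bar>h\<bar> < d \<Longrightarrow> (\<integral>x. (g (x + h) - g x)\<^sup>2 \<partial>lborel) < e / 9"
    using L2_shift_continuous_bounded[OF integrable_truncate[OF fm] truncate_bounds(1), of "e / 9" N] e
    unfolding g_def by auto
  have gm: "g \<in> borel_measurable lborel" unfolding g_def using fm by measurable
  have intC: "integrable lborel (\<lambda>x. (f x - g x)\<^sup>2)"
  proof (rule Bochner_Integration.integrable_bound[OF fi])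
    show "(\<lambda>x. (f x - g x)\<^sup>2) \<in> borel_measurable lborel" using fm gm by measurable
    show "AE x in lborel. norm ((f x - g x)\<^sup>2) \<le> norm ((f x)\<^sup>2)"
      using truncate_bounds(3)[of f _ N] by (intro AE_I2) (simp add: g_def abs_le_square_iff)
  qed
  have "(\<integral>x. (f (x + h) - f x)\<^sup>2 \<partial>lborel) < e" if h: "\<bar>h\<bar> < d" for h
  proof -
    have intA: "integrable lborel (\<lambda>x. (f (x + h) - g (x + h))\<^sup>2)"
      using integrable_lborel_translate[OF intC] by simp
    have "integrable lborel (\<lambda>x. (g x)\<^sup>2)"
    proof (rule Bochner_Integration.integrable_bound[OF fi])
      show "AE x in lborel. norm ((g x)\<^sup>2) \<le> norm ((f x)\<^sup>2)"
        using truncate_bounds(2)[of N f] by (intro AE_I2) (simp add: g_def abs_le_square_iff)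
    qed (use gm in simp)
    then have intB: "integrable lborel (\<lambda>x. (g (x + h) - g x)\<^sup>2)"
      using gm by (intro integrable_square_diff_translate)
    have intC': "integrable lborel (\<lambda>x. (g x - f x)\<^sup>2)" using intC by (simp add: power2_commute)
    have "(\<integral>x. (f (x + h) - f x)\<^sup>2 \<partial>lborel)
        \<le> (\<integral>x. 3 * ((f (x + h) - g (x + h))\<^sup>2 + (g (x + h) - g x)\<^sup>2 + (g x - f x)\<^sup>2) \<partial>lborel)"
    proof (rule integral_mono)
      show "integrable lborel (\<lambda>x. (f (x + h) - f x)\<^sup>2)"
        using fm fi by (rule integrable_square_diff_translate)
      show "(f (x + h) - f x)\<^sup>2 \<le> 3 * ((f (x + h) - g (x + h))\<^sup>2 + (g (x + h) - g x)\<^sup>2 + (g x - f x)\<^sup>2)"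
        for x using square_sum3_le[of "f (x + h) - g (x + h)" "g (x + h) - g x" "g x - f x"] by simp
    qed (intro integrable_mult_right Bochner_Integration.integrable_add intA intB intC')
    also have "\<dots> = 3 * ((\<integral>x. (f x - g x)\<^sup>2 \<partial>lborel) + (\<integral>x. (g (x + h) - g x)\<^sup>2 \<partial>lborel)
        + (\<integral>x. (f x - g x)\<^sup>2 \<partial>lborel))"
      using intA intB intC' integral_lborel_translate[of "\<lambda>x. (f x - g x)\<^sup>2" h]
      by (simp add: power2_commute)
    also have "\<dots> < e" using N d(2)[OF h] unfolding g_def by simp
    finally show ?thesis .
  qed
  then show ?thesis using that d(1) by blast
qed

section \<open>Translated \<open>H\<^sup>1\<close> profiles\<close>

lemma L2_translate:
  assumes "L2 f"
  shows "L2 (\<lambda>x. f (x - a))"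
proof -
  have fm: "f \<in> borel_measurable lborel" and fi: "integrable lborel (\<lambda>x. (f x)\<^sup>2)"
    using assms unfolding L2_def by auto
  have "(\<lambda>x. f (x - a)) \<in> borel_measurable lborel"
    using fm by (simp add: measurable_lborel1)
  moreover have "integrable lborel (\<lambda>x. (f (x - a))\<^sup>2)"
    using integrable_lborel_translate[OF fi, of "- a"] by simp
  ultimately show ?thesis unfolding L2_def by simp
qed

lemma deriv_funpow_translate:
  fixes \<psi> :: "real \<Rightarrow> real"
  assumes "\<And>n x. (deriv ^^ n) \<psi> differentiable (at x)"
  shows "(deriv ^^ n) (\<lambda>y. \<psi> (y + a)) = (\<lambda>y. (deriv ^^ n) \<psi> (y + a))"
proof (induction n)
  case (Suc n)
  have "((\<lambda>y. (deriv ^^ n) \<psi> (y + a)) has_real_derivative deriv ((deriv ^^ n) \<psi>) (y + a)) (at y)" for y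
  proof -
    have "((deriv ^^ n) \<psi> has_real_derivative deriv ((deriv ^^ n) \<psi>) (y + a)) (at (y + a))"
      using assms[of n "y + a"] by (simp add: DERIV_deriv_iff_real_differentiable)
    moreover have "((\<lambda>y. y + a) has_real_derivative 1) (at y)"
      by (auto intro!: derivative_eq_intros)
    ultimately show ?thesis using DERIV_chain2 by fastforce
  qed
  then have "deriv (\<lambda>y. (deriv ^^ n) \<psi> (y + a)) = (\<lambda>y. deriv ((deriv ^^ n) \<psi>) (y + a))"
    by (intro ext DERIV_imp_deriv)
  then show ?case using Suc.IH by simp
qed simp

lemma test_fun1_translate:
  fixes \<psi> :: "real \<Rightarrow> real"
  assumes "test_fun1 \<psi>"
  shows "test_fun1 (\<lambda>y. \<psi> (y + a))"
proof -
  have dif: "\<And>n x. (deriv ^^ n) \<psi> differentiable (at x)" and cp: "compact (closure {x. \<psi> x \<noteq> 0})"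
    using assms unfolding test_fun1_def by simp_all
  have "(\<lambda>y. (deriv ^^ n) \<psi> (y + a)) differentiable (at x)" for n x
    using dif[of n "x + a"] by (auto intro!: derivative_intros simp: o_def
      differentiable_compose[of "(deriv ^^ n) \<psi>" "\<lambda>y. y + a", unfolded o_def])
  moreover have "{y. \<psi> (y + a) \<noteq> 0} = (+) (- a) ` {x. \<psi> x \<noteq> 0}"
    by (force simp: image_iff)
  then have "compact (closure {y. \<psi> (y + a) \<noteq> 0})"
    using compact_translation_subtract[OF cp, of a] by (simp add: closure_translation_subtract)
  ultimately show ?thesis unfolding test_fun1_def deriv_funpow_translate[OF dif] by simp
qed

lemma H1_deriv_translate:
  assumes H: "H1_deriv U Ux"
  shows "H1_deriv (\<lambda>x. U (x - a)) (\<lambda>x. Ux (x - a))"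
  unfolding H1_deriv_def
proof (intro conjI allI impI)
  show "L2 (\<lambda>x. U (x - a))" "L2 (\<lambda>x. Ux (x - a))"
    using H unfolding H1_deriv_def by (simp_all add: L2_translate)
  fix \<psi> assume \<psi>: "test_fun1 \<psi>"
  have "deriv (\<lambda>y. \<psi> (y + a)) = (\<lambda>y. deriv \<psi> (y + a))"
    using \<psi> deriv_funpow_translate[of \<psi> 1 a] unfolding test_fun1_def by simp
  then have "(\<integral>x. U (x - a) * deriv \<psi> x \<partial>lborel) = (\<integral>x. U x * deriv (\<lambda>y. \<psi> (y + a)) x \<partial>lborel)"
    using integral_lborel_translate[of "\<lambda>x. U (x - a) * deriv \<psi> x" a] by simp
  also have "\<dots> = - (\<integral>x. Ux x * \<psi> (x + a) \<partial>lborel)"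
    using H test_fun1_translate[OF \<psi>] unfolding H1_deriv_def by blast
  also have "(\<integral>x. Ux x * \<psi> (x + a) \<partial>lborel) = (\<integral>x. Ux (x - a) * \<psi> x \<partial>lborel)"
    using integral_lborel_translate[of "\<lambda>x. Ux (x - a) * \<psi> x" a] by simp
  finally show "(\<integral>x. U (x - a) * deriv \<psi> x \<partial>lborel) = - (\<integral>x. Ux (x - a) * \<psi> x \<partial>lborel)" .
qed

lemma H1_dist_travelling_wave:
  assumes H: "H1_deriv U Ux" and \<epsilon>: "\<epsilon> > 0"
  shows "\<forall>\<^sub>F t in nhds t1. H1_dist (\<lambda>x. U (x - c * (t - t0))) (\<lambda>x. Ux (x - c * (t - t0)))
    (\<lambda>x. U (x - c * (t1 - t0))) (\<lambda>x. Ux (x - c * (t1 - t0))) < \<epsilon>"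
proof -
  have \<epsilon>2: "\<epsilon>\<^sup>2 / 2 > 0" using \<epsilon> by simp
  obtain d1 where d1: "d1 > 0" "\<And>h. \<bar>h\<bar> < d1 \<Longrightarrow> (\<integral>x. (U (x + h) - U x)\<^sup>2 \<partial>lborel) < \<epsilon>\<^sup>2 / 2"
    using L2_shift_continuous[OF _ \<epsilon>2, of U] H unfolding H1_deriv_def by blast
  obtain d2 where d2: "d2 > 0" "\<And>h. \<bar>h\<bar> < d2 \<Longrightarrow> (\<integral>x. (Ux (x + h) - Ux x)\<^sup>2 \<partial>lborel) < \<epsilon>\<^sup>2 / 2"
    using L2_shift_continuous[OF _ \<epsilon>2, of Ux] H unfolding H1_deriv_def by blast
  define m where "m = min d1 d2"
  have "m > 0" unfolding m_def using d1(1) d2(1) by simp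
  define \<delta> where "\<delta> = m / (\<bar>c\<bar> + 1)"
  have "H1_dist (\<lambda>x. U (x - c * (t - t0))) (\<lambda>x. Ux (x - c * (t - t0)))
      (\<lambda>x. U (x - c * (t1 - t0))) (\<lambda>x. Ux (x - c * (t1 - t0))) < \<epsilon>" if t: "dist t t1 < \<delta>" for t
  proof -
    define h where "h = c * (t1 - t)"
    have "\<bar>h\<bar> \<le> \<bar>c\<bar> * \<delta>"
      unfolding h_def abs_mult using t by (intro mult_left_mono) (auto simp: dist_real_def)
    also have "\<dots> < m" unfolding \<delta>_def using \<open>m > 0\<close> by (simp add: field_simps)
    finally have h: "\<bar>h\<bar> < d1" "\<bar>h\<bar> < d2" unfolding m_def by auto
    have shift: "(\<integral>x. (F (x - c * (t - t0)) - F (x - c * (t1 - t0)))\<^sup>2 \<partial>lborel)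
        = (\<integral>x. (F (x + h) - F x)\<^sup>2 \<partial>lborel)" for F :: "real \<Rightarrow> real"
      using integral_lborel_translate[of "\<lambda>x. (F (x - c * (t - t0)) - F (x - c * (t1 - t0)))\<^sup>2"
        "c * (t1 - t0)"] by (simp add: h_def algebra_simps)
    have "H1_dist (\<lambda>x. U (x - c * (t - t0))) (\<lambda>x. Ux (x - c * (t - t0)))
        (\<lambda>x. U (x - c * (t1 - t0))) (\<lambda>x. Ux (x - c * (t1 - t0))) < sqrt (\<epsilon>\<^sup>2)"
      unfolding H1_dist_def shift using d1(2)[OF h(1)] d2(2)[OF h(2)]
      by (intro real_sqrt_less_mono) linarith
    then show ?thesis using \<epsilon> by simp
  qed
  moreover have "\<delta> > 0" unfolding \<delta>_def using \<open>m > 0\<close> by simp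
  ultimately show ?thesis unfolding eventually_nhds_metric by blast
qed

theorem lemma4p1:
  fixes c t0 :: real and U V W Ux Vx Wx :: "real \<Rightarrow> real"
  assumes HU: "H1_deriv U Ux" and HV: "H1_deriv V Vx" and HW: "H1_deriv W Wx"
    and eqs: "\<And>\<phi>. test_fun \<phi> \<Longrightarrow>
        pair (\<lambda>t x. - c * U x) (Lop (pdx \<phi>))
          + CH_rest (\<lambda>t. U) (\<lambda>t. Ux) (\<lambda>t. V) (\<lambda>t. Vx) (\<lambda>t. W) (\<lambda>t. Wx) \<phi> = 0 \<and>
        pair (\<lambda>t x. - c * V x) (Lop (pdx \<phi>))
          + CH_rest (\<lambda>t. V) (\<lambda>t. Vx) (\<lambda>t. U) (\<lambda>t. Ux) (\<lambda>t. W) (\<lambda>t. Wx) \<phi> = 0 \<and>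
        pair (\<lambda>t x. - c * W x) (Lop (pdx \<phi>))
          + CH_rest (\<lambda>t. W) (\<lambda>t. Wx) (\<lambda>t. U) (\<lambda>t. Ux) (\<lambda>t. V) (\<lambda>t. Vx) \<phi> = 0"
    and t0: "t0 > 0"
  shows "CH3_weak_solution (\<lambda>t x. U (x - c * (t - t0))) (\<lambda>t x. V (x - c * (t - t0)))
           (\<lambda>t x. W (x - c * (t - t0)))"
proof -
  define z where "z = (\<lambda>(F :: real \<Rightarrow> real) t x. F (x - c * (t - t0)))"
  have H1: "H1_deriv (z F t) (z Fx t)" if "H1_deriv F Fx" for F Fx t
    using that by (simp add: z_def H1_deriv_translate)
  have cont: "\<exists>\<delta>>0. \<forall>t>0. \<bar>t - t1\<bar> < \<delta> \<longrightarrow> H1_dist (z U t) (z Ux t) (z U t1) (z Ux t1) < \<epsilon> \<and>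
      H1_dist (z V t) (z Vx t) (z V t1) (z Vx t1) < \<epsilon> \<and> H1_dist (z W t) (z Wx t) (z W t1) (z Wx t1) < \<epsilon>"
    if "\<epsilon> > 0" for t1 \<epsilon>
    using eventually_conj[OF H1_dist_travelling_wave[OF HU that]
        eventually_conj[OF H1_dist_travelling_wave[OF HV that] H1_dist_travelling_wave[OF HW that]]]
    unfolding z_def eventually_nhds_metric dist_real_def by blast
  have weak: "pair (z U) (Lop (pdt \<phi>)) + CH_rest (z U) (z Ux) (z V) (z Vx) (z W) (z Wx) \<phi> = 0 \<and>
      pair (z V) (Lop (pdt \<phi>)) + CH_rest (z V) (z Vx) (z U) (z Ux) (z W) (z Wx) \<phi> = 0 \<and>
      pair (z W) (Lop (pdt \<phi>)) + CH_rest (z W) (z Wx) (z U) (z Ux) (z V) (z Vx) \<phi> = 0"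
    if "test_fun \<phi>" for \<phi>
  proof -
    have "L2 U" "L2 V" "L2 W" using HU HV HW unfolding H1_deriv_def by simp_all
    then show ?thesis
      unfolding z_def using that eqs by (intro conjI travelling_wave_weak_eq) blast+
  qed
  have "CH3_weak_solution (z U) (z V) (z W)"
    unfolding CH3_weak_solution_def
    by (rule exI[of _ "z Ux"], rule exI[of _ "z Vx"], rule exI[of _ "z Wx"], intro conjI allI impI)
      (use H1[OF HU] H1[OF HV] H1[OF HW] cont weak in simp_all)
  then show ?thesis unfolding z_def .
qed
end
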